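(* Let $(G_n)_{n\in\mathbb N}$ and $(H_n)_{n\in\mathbb N}$ be sequences of groups and let $(P_n)_{n\in\mathbb N}$ be a partition of $\mathbb N$ into finite sets. If for every $n$ there is an injective homomorphism $\varphi_n:G_n\to *_{i\in P_n}H_i$, then $\mathcal A(G_n)$ embeds in $\mathcal A(H_n)$.
   Context: For a sequence of groups $(G_n)_{n\in\mathbb N}$, an infinite word is a map $w:L\to\bigsqcup_n (G_n\setminus\{1\})$ from a countable linearly ordered set $L$ such that $w^{-1}(G_n)$ is finite for every $n$. Two infinite words are equivalent if for every $m$ their restrictions to the letters from $G_1,\dots,G_m$ represent the same element of $G_1*\cdots*G_m$. The topologist's product $\circledast_n G_n$ is the group of equivalence classes, with multiplication induced by concatenation and inversion by reversing the order and inverting each letter. The free product $*_n G_n$ is the subgroup of classes of finite words. The archipelago group is $\mathcal A(G_n):=\circledast_n G_n/\langle\langle *_n G_n\rangle\rangle$ (quotient by normal closure). *)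

theory Defs
  imports "HOL-Algebra.Algebra"
begin

definition fp_words :: "(nat \<Rightarrow> ('a, 'c) monoid_scheme) \<Rightarrow> nat set \<Rightarrow> (nat \<times> 'a) list set" where
  "fp_words G I = {ws. \<forall>(i, g) \<in> set ws. i \<in> I \<and> g \<in> carrier (G i)}"

inductive fp_step :: "(nat \<Rightarrow> ('a, 'c) monoid_scheme) \<Rightarrow> (nat \<times> 'a) list \<Rightarrow> (nat \<times> 'a) list \<Rightarrow> bool"
  for G where
  merge: "fp_step G (xs @ [(n, g), (n, h)] @ ys) (xs @ [(n, g \<otimes>\<^bsub>G n\<^esub> h)] @ ys)"
| delete: "fp_step G (xs @ [(n, \<one>\<^bsub>G n\<^esub>)] @ ys) (xs @ ys)"

definition fp_rel :: "(nat \<Rightarrow> ('a, 'c) monoid_scheme) \<Rightarrow> nat set \<Rightarrow> (nat \<times> 'a) list \<Rightarrow> (nat \<times> 'a) list \<Rightarrow> bool" where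
  "fp_rel G I xs ys \<longleftrightarrow> fp_step G xs ys \<and> xs \<in> fp_words G I \<and> ys \<in> fp_words G I"

definition fp_eq :: "(nat \<Rightarrow> ('a, 'c) monoid_scheme) \<Rightarrow> nat set \<Rightarrow> (nat \<times> 'a) list \<Rightarrow> (nat \<times> 'a) list \<Rightarrow> bool" where
  "fp_eq G I = equivclp (fp_rel G I)"

definition fp_class :: "(nat \<Rightarrow> ('a, 'c) monoid_scheme) \<Rightarrow> nat set \<Rightarrow> (nat \<times> 'a) list \<Rightarrow> (nat \<times> 'a) list set" where
  "fp_class G I xs = {ys \<in> fp_words G I. fp_eq G I xs ys}"

definition free_product :: "(nat \<Rightarrow> ('a, 'c) monoid_scheme) \<Rightarrow> nat set \<Rightarrow> ((nat \<times> 'a) list set) monoid" where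
  "free_product G I =
    \<lparr> carrier = fp_class G I ` fp_words G I,
      monoid.mult = (\<lambda>A B. {zs \<in> fp_words G I. \<exists>xs\<in>A. \<exists>ys\<in>B. fp_eq G I (xs @ ys) zs}),
      one = fp_class G I [] \<rparr>"

text \<open>An infinite word is a pair (L, w) where the countable linear order L is realised as a
  subset of the rationals (every countable linear order embeds in Q) and w x = (n, g)
  means that the letter at position x is g, taken from G n.\<close>

type_synonym 'a iword = "rat set \<times> (rat \<Rightarrow> nat \<times> 'a)"

definition is_iword :: "(nat \<Rightarrow> ('a, 'c) monoid_scheme) \<Rightarrow> 'a iword \<Rightarrow> bool" where
  "is_iword G W \<longleftrightarrow>
     (\<forall>x \<in> fst W. snd (snd W x) \<in> carrier (G (fst (snd W x)))
                \<and> snd (snd W x) \<noteq> \<one>\<^bsub>G (fst (snd W x))\<^esub>)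
   \<and> (\<forall>n. finite {x \<in> fst W. fst (snd W x) = n})"

definition iword_restr :: "nat \<Rightarrow> 'a iword \<Rightarrow> (nat \<times> 'a) list" where
  "iword_restr m W = map (snd W) (sorted_list_of_set {x \<in> fst W. fst (snd W x) < m})"

definition iword_eq :: "(nat \<Rightarrow> ('a, 'c) monoid_scheme) \<Rightarrow> 'a iword \<Rightarrow> 'a iword \<Rightarrow> bool" where
  "iword_eq G W V \<longleftrightarrow> (\<forall>m. fp_eq G {..<m} (iword_restr m W) (iword_restr m V))"

text \<open>Order isomorphisms Q -> Q_{<0} and Q -> Q_{>0}, used to concatenate.\<close>
definition neg_emb :: "rat \<Rightarrow> rat" where
  "neg_emb q = (if q \<le> 0 then q - 1 else - 1 / (q + 1))"
definition neg_emb_inv :: "rat \<Rightarrow> rat" where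
  "neg_emb_inv x = (if x \<le> -1 then x + 1 else - 1 / x - 1)"
definition pos_emb :: "rat \<Rightarrow> rat" where
  "pos_emb q = - neg_emb (- q)"
definition pos_emb_inv :: "rat \<Rightarrow> rat" where
  "pos_emb_inv x = - neg_emb_inv (- x)"

definition iword_concat :: "'a iword \<Rightarrow> 'a iword \<Rightarrow> 'a iword" where
  "iword_concat W V =
     (neg_emb ` fst W \<union> pos_emb ` fst V,
      \<lambda>x. if x < 0 then snd W (neg_emb_inv x) else snd V (pos_emb_inv x))"

definition iword_class :: "(nat \<Rightarrow> ('a, 'c) monoid_scheme) \<Rightarrow> 'a iword \<Rightarrow> 'a iword set" where
  "iword_class G W = {V. is_iword G V \<and> iword_eq G W V}"

definition topologists_product :: "(nat \<Rightarrow> ('a, 'c) monoid_scheme) \<Rightarrow> ('a iword set) monoid" where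
  "topologists_product G =
    \<lparr> carrier = iword_class G ` {W. is_iword G W},
      monoid.mult = (\<lambda>A B. {U. is_iword G U \<and> (\<exists>W\<in>A. \<exists>V\<in>B. iword_eq G (iword_concat W V) U)}),
      one = iword_class G ({}, \<lambda>_. undefined) \<rparr>"

text \<open>The free product as the subgroup of classes of finite words.\<close>
definition free_part :: "(nat \<Rightarrow> ('a, 'c) monoid_scheme) \<Rightarrow> 'a iword set set" where
  "free_part G = {A \<in> carrier (topologists_product G). \<exists>W\<in>A. finite (fst W)}"

definition normal_closure :: "('a, 'c) monoid_scheme \<Rightarrow> 'a set \<Rightarrow> 'a set" where
  "normal_closure K S = generate K {g \<otimes>\<^bsub>K\<^esub> s \<otimes>\<^bsub>K\<^esub> inv\<^bsub>K\<^esub> g | g s. g \<in> carrier K \<and> s \<in> S}"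

definition archipelago :: "(nat \<Rightarrow> ('a, 'c) monoid_scheme) \<Rightarrow> ('a iword set set) monoid" where
  "archipelago G = topologists_product G Mod normal_closure (topologists_product G) (free_part G)"

definition embeds :: "('a, 'c) monoid_scheme \<Rightarrow> ('b, 'd) monoid_scheme \<Rightarrow> bool" where
  "embeds K M \<longleftrightarrow> (\<exists>f. f \<in> hom K M \<and> inj_on f (carrier K))"

definition finite_partition :: "(nat \<Rightarrow> nat set) \<Rightarrow> bool" where
  "finite_partition P \<longleftrightarrow> (\<forall>n. finite (P n) \<and> P n \<noteq> {})
     \<and> (\<forall>m n. m \<noteq> n \<longrightarrow> P m \<inter> P n = {}) \<and> (\<Union>n. P n) = UNIV"

end

theory Submission
  imports Defs "HOL-Library.Countable"
begin

(* Replacing every letter g of G_n in an infinite word by the reduced word phi_n(g) over the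
   H_i, i in P_n, gives an infinite word over the H_i (the positions become pairs (x, j), ordered
   lexicographically), and this substitution is a homomorphism of topologist's products.
   The normal closure of the free product consists exactly of the elements that become trivial
   after deleting the letters of finitely many factors: the remaining letters of those factors
   can be peeled off one at a time as conjugates of finite words. As the P_n are finite and
   partition the indices, deleting finitely many G_n corresponds to deleting finitely many H_i,
   and injectivity of the phi_n shows that a word trivialised by the substitution was already
   trivial. So the normal closure for the G_n is exactly the preimage of the normal closure for
   the H_n, and the substitution induces an injective homomorphism of archipelago groups. *)

section \<open>Reduced words over a family of groups\<close>

definition is_word :: "(nat \<Rightarrow> ('a, 'c) monoid_scheme) \<Rightarrow> (nat \<times> 'a) list \<Rightarrow> bool" where
  "is_word G xs \<longleftrightarrow> (\<forall>x\<in>set xs. snd x \<in> carrier (G (fst x)))"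

fun reduced_word :: "(nat \<Rightarrow> ('a, 'c) monoid_scheme) \<Rightarrow> (nat \<times> 'a) list \<Rightarrow> bool" where
  "reduced_word G [] = True"
| "reduced_word G (x # xs) \<longleftrightarrow>
     snd x \<in> carrier (G (fst x)) \<and> snd x \<noteq> \<one>\<^bsub>G (fst x)\<^esub> \<and> reduced_word G xs
     \<and> (xs = [] \<or> fst (hd xs) \<noteq> fst x)"

definition lmult_letter ::
    "(nat \<Rightarrow> ('a, 'c) monoid_scheme) \<Rightarrow> nat \<times> 'a \<Rightarrow> (nat \<times> 'a) list \<Rightarrow> (nat \<times> 'a) list" where
  "lmult_letter G x r =
    (if snd x = \<one>\<^bsub>G (fst x)\<^esub> then r else
     (case r of
        [] \<Rightarrow> [x]
      | y # r' \<Rightarrow>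
          if fst y = fst x then
            (if snd x \<otimes>\<^bsub>G (fst x)\<^esub> snd y = \<one>\<^bsub>G (fst x)\<^esub> then r'
             else (fst x, snd x \<otimes>\<^bsub>G (fst x)\<^esub> snd y) # r')
          else x # r))"

definition lmult_word ::
    "(nat \<Rightarrow> ('a, 'c) monoid_scheme) \<Rightarrow> (nat \<times> 'a) list \<Rightarrow> (nat \<times> 'a) list \<Rightarrow> (nat \<times> 'a) list" where
  "lmult_word G xs r = foldr (lmult_letter G) xs r"

definition reduce :: "(nat \<Rightarrow> ('a, 'c) monoid_scheme) \<Rightarrow> (nat \<times> 'a) list \<Rightarrow> (nat \<times> 'a) list" where
  "reduce G xs = lmult_word G xs []"

definition inv_word :: "(nat \<Rightarrow> ('a, 'c) monoid_scheme) \<Rightarrow> (nat \<times> 'a) list \<Rightarrow> (nat \<times> 'a) list" where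
  "inv_word G xs = rev (map (\<lambda>x. (fst x, inv\<^bsub>G (fst x)\<^esub> snd x)) xs)"

lemma is_word_simps [simp]:
  "is_word G []"
  "is_word G (x # xs) \<longleftrightarrow> snd x \<in> carrier (G (fst x)) \<and> is_word G xs"
  "is_word G (xs @ ys) \<longleftrightarrow> is_word G xs \<and> is_word G ys"
  by (auto simp: is_word_def)

lemma is_word_filter: "is_word G xs \<Longrightarrow> is_word G (filter Q xs)"
  by (auto simp: is_word_def)

lemma lmult_word_simps [simp]:
  "lmult_word G [] r = r"
  "lmult_word G (x # xs) r = lmult_letter G x (lmult_word G xs r)"
  "lmult_word G (xs @ ys) r = lmult_word G xs (lmult_word G ys r)"
  by (auto simp: lmult_word_def)

lemma reduce_Nil [simp]: "reduce G [] = []"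
  by (simp add: reduce_def)

lemma reduce_Cons [simp]: "reduce G (x # xs) = lmult_letter G x (reduce G xs)"
  by (simp add: reduce_def)

lemma reduce_append: "reduce G (xs @ ys) = lmult_word G xs (reduce G ys)"
  by (simp add: reduce_def)

lemma inv_word_simps [simp]:
  "inv_word G [] = []"
  "inv_word G (x # xs) = inv_word G xs @ [(fst x, inv\<^bsub>G (fst x)\<^esub> snd x)]"
  "inv_word G (xs @ ys) = inv_word G ys @ inv_word G xs"
  by (auto simp: inv_word_def)

lemma filter_inv_word:
  "filter (\<lambda>l. Q (fst l)) (inv_word G xs) = inv_word G (filter (\<lambda>l. Q (fst l)) xs)"
  by (induction xs) auto

lemma reduced_word_imp_is_word: "reduced_word G r \<Longrightarrow> is_word G r"
  by (induction r) auto

lemma reduced_word_append: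
  assumes "reduced_word G s" "reduced_word G t" "s = [] \<or> t = [] \<or> fst (last s) \<noteq> fst (hd t)"
  shows "reduced_word G (s @ t)"
  using assms
proof (induction s)
  case (Cons x s)
  then show ?case by (cases s) auto
qed simp

lemma lmult_letter_one [simp]: "lmult_letter G (n, \<one>\<^bsub>G n\<^esub>) r = r"
  by (simp add: lmult_letter_def)

lemma lmult_word_reduced_append: "reduced_word G (s @ t) \<Longrightarrow> lmult_word G s t = s @ t"
proof (induction s)
  case (Cons x s)
  then have "lmult_word G s t = s @ t" by simp
  with Cons.prems show ?case
    by (cases "s @ t") (auto simp: lmult_letter_def)
qed simp

lemma reduce_reduced: "reduced_word G r \<Longrightarrow> reduce G r = r"
  using lmult_word_reduced_append[of G r "[]"] by (simp add: reduce_def)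

locale group_family =
  fixes G :: "nat \<Rightarrow> ('a, 'c) monoid_scheme"
  assumes group_factor: "group (G n)"
begin

lemma reduced_lmult_letter:
  assumes "reduced_word G r" "snd x \<in> carrier (G (fst x))"
  shows "reduced_word G (lmult_letter G x r)"
proof (cases r)
  case (Cons y r')
  then show ?thesis
    using assms by (cases r') (auto simp: lmult_letter_def group.is_monoid[OF group_factor] monoid.m_closed)
qed (use assms in \<open>auto simp: lmult_letter_def\<close>)

lemma reduced_lmult_word:
  "reduced_word G r \<Longrightarrow> is_word G xs \<Longrightarrow> reduced_word G (lmult_word G xs r)"
  by (induction xs) (auto intro: reduced_lmult_letter)

lemma reduced_reduce: "is_word G xs \<Longrightarrow> reduced_word G (reduce G xs)"
  by (simp add: reduce_def reduced_lmult_word)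

lemma is_word_reduce: "is_word G xs \<Longrightarrow> is_word G (reduce G xs)"
  by (simp add: reduced_reduce reduced_word_imp_is_word)

lemma reduce_idem: "is_word G xs \<Longrightarrow> reduce G (reduce G xs) = reduce G xs"
  by (simp add: reduced_reduce reduce_reduced)

lemma lmult_letter_lmult_letter:
  assumes r: "reduced_word G r" and g: "g \<in> carrier (G n)" and h: "h \<in> carrier (G n)"
  shows "lmult_letter G (n, g) (lmult_letter G (n, h) r) = lmult_letter G (n, g \<otimes>\<^bsub>G n\<^esub> h) r"
proof -
  interpret grp: group "G n" by (rule group_factor)
  consider "h = \<one>\<^bsub>G n\<^esub>" | "g = \<one>\<^bsub>G n\<^esub>" | "r = []"
    | k r' where "r = (n, k) # r'" "h \<noteq> \<one>\<^bsub>G n\<^esub>" "g \<noteq> \<one>\<^bsub>G n\<^esub>"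
    | y r' where "r = y # r'" "fst y \<noteq> n" "h \<noteq> \<one>\<^bsub>G n\<^esub>" "g \<noteq> \<one>\<^bsub>G n\<^esub>"
  proof (cases r)
    case (Cons y r')
    then show ?thesis using that by (cases y) (cases "fst y = n", auto)
  qed (use that in blast)
  then show ?thesis
  proof cases
    case 4
    have k: "k \<in> carrier (G n)" "k \<noteq> \<one>\<^bsub>G n\<^esub>" and r': "r' = [] \<or> fst (hd r') \<noteq> n"
      using r 4 by auto
    show ?thesis
    proof (cases "h \<otimes>\<^bsub>G n\<^esub> k = \<one>\<^bsub>G n\<^esub>")
      case hk: True
      have r'_cons: "lmult_letter G (n, g) r' = (n, g) # r'"
        using r' 4 by (cases r') (auto simp: lmult_letter_def)
      have ghk: "g \<otimes>\<^bsub>G n\<^esub> h \<otimes>\<^bsub>G n\<^esub> k = g"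
        using hk g h k by (simp add: grp.m_assoc)
      then have "g \<otimes>\<^bsub>G n\<^esub> h = \<one>\<^bsub>G n\<^esub> \<Longrightarrow> k = g"
        using k by simp
      with r'_cons ghk show ?thesis
        using hk 4 by (auto simp: lmult_letter_def)
    next
      case hk: False
      have "g \<otimes>\<^bsub>G n\<^esub> (h \<otimes>\<^bsub>G n\<^esub> k) = g \<otimes>\<^bsub>G n\<^esub> h \<otimes>\<^bsub>G n\<^esub> k"
        using g h k by (simp add: grp.m_assoc)
      moreover have "g \<otimes>\<^bsub>G n\<^esub> h = \<one>\<^bsub>G n\<^esub> \<Longrightarrow> g \<otimes>\<^bsub>G n\<^esub> h \<otimes>\<^bsub>G n\<^esub> k = k"
        using k by simp
      ultimately show ?thesis
        using hk 4 k by (simp add: lmult_letter_def)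
    qed
  qed (use g h in \<open>simp_all add: lmult_letter_def\<close>)
qed

lemma lmult_word_lmult_letter:
  assumes s: "reduced_word G s" and r: "reduced_word G r" and x: "snd x \<in> carrier (G (fst x))"
  shows "lmult_word G (lmult_letter G x s) r = lmult_letter G x (lmult_word G s r)"
proof -
  obtain n g where x_eq: "x = (n, g)" by (cases x)
  have g: "g \<in> carrier (G n)" using x x_eq by simp
  consider "g = \<one>\<^bsub>G n\<^esub>" | "s = []"
    | h s' where "s = (n, h) # s'" "g \<noteq> \<one>\<^bsub>G n\<^esub>"
    | y s' where "s = y # s'" "fst y \<noteq> n" "g \<noteq> \<one>\<^bsub>G n\<^esub>"
  proof (cases s)
    case (Cons y s')
    then show ?thesis using that by (cases y) (cases "fst y = n", auto)
  qed (use that in blast)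
  then show ?thesis
  proof cases
    case 3
    have h: "h \<in> carrier (G n)" and s': "reduced_word G s'" using s 3 by auto
    have "lmult_letter G x (lmult_word G s r) = lmult_letter G (n, g \<otimes>\<^bsub>G n\<^esub> h) (lmult_word G s' r)"
      using 3 x_eq lmult_letter_lmult_letter[OF reduced_lmult_word[OF r reduced_word_imp_is_word[OF s']] g h]
      by simp
    then show ?thesis
      using 3 x_eq by (simp add: lmult_letter_def)
  qed (use x_eq in \<open>auto simp: lmult_letter_def\<close>)
qed

lemma lmult_word_reduce:
  assumes "is_word G xs" "reduced_word G r"
  shows "lmult_word G (reduce G xs) r = lmult_word G xs r"
  using assms(1)
proof (induction xs)
  case (Cons x xs)
  then show ?case
    using lmult_word_lmult_letter[OF reduced_reduce assms(2)] by simp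
qed (simp add: reduce_def)

lemma reduce_append_reduce:
  assumes "is_word G xs" "is_word G ys"
  shows "reduce G (reduce G xs @ reduce G ys) = reduce G (xs @ ys)"
  using assms by (simp add: reduce_append reduce_idem lmult_word_reduce reduced_reduce)

lemma is_word_inv_word: "is_word G xs \<Longrightarrow> is_word G (inv_word G xs)"
  by (induction xs) (auto simp: group.inv_closed[OF group_factor])

lemma inv_word_inv_word: "is_word G xs \<Longrightarrow> inv_word G (inv_word G xs) = xs"
  by (induction xs) (auto simp: group.inv_inv[OF group_factor])

lemma lmult_word_inv_word_cancel:
  assumes "is_word G xs" "reduced_word G r"
  shows "lmult_word G (inv_word G xs) (lmult_word G xs r) = r"
  using assms
proof (induction xs arbitrary: r)
  case (Cons x xs)
  obtain n g where x_eq: "x = (n, g)" by (cases x)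
  interpret grp: group "G n" by (rule group_factor)
  have g: "g \<in> carrier (G n)" and xs: "is_word G xs" using Cons.prems x_eq by auto
  have "lmult_letter G (n, inv\<^bsub>G n\<^esub> g) (lmult_letter G (n, g) (lmult_word G xs r)) = lmult_word G xs r"
    using lmult_letter_lmult_letter[OF reduced_lmult_word[OF Cons.prems(2) xs] grp.inv_closed[OF g] g] g
    by simp
  then show ?case using Cons.IH[OF xs Cons.prems(2)] x_eq by simp
qed simp

lemma lmult_word_cancel_inv_word:
  assumes "is_word G xs" "reduced_word G r"
  shows "lmult_word G xs (lmult_word G (inv_word G xs) r) = r"
  using lmult_word_inv_word_cancel[OF is_word_inv_word[OF assms(1)] assms(2)] inv_word_inv_word[OF assms(1)]
  by simp

lemma reduce_inv_word_append: "is_word G xs \<Longrightarrow> reduce G (inv_word G xs @ xs) = []"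
  using lmult_word_inv_word_cancel[of xs "[]"] by (simp add: reduce_def)

end

section \<open>Normal forms in free products\<close>

lemma fp_words_iff: "xs \<in> fp_words G I \<longleftrightarrow> is_word G xs \<and> fst ` set xs \<subseteq> I"
  by (auto simp: fp_words_def is_word_def)

lemma fp_step_Cons: "fp_step G xs ys \<Longrightarrow> fp_step G (x # xs) (x # ys)"
proof (induction rule: fp_step.cases)
  case (merge as n g h bs)
  then show ?case using fp_step.merge[of G "x # as" n g h bs] by simp
next
  case (delete as n bs)
  then show ?case using fp_step.delete[of G "x # as" n bs] by simp
qed

lemma fp_eq_Cons:
  assumes "fp_eq G I xs ys" "[x] \<in> fp_words G I"
  shows "fp_eq G I (x # xs) (x # ys)"
  using assms(1) unfolding fp_eq_def
proof (induction rule: equivclp_induct)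
  case (step y z)
  then have "fp_rel G I (x # y) (x # z) \<or> fp_rel G I (x # z) (x # y)"
    using assms(2) unfolding fp_rel_def by (auto simp: fp_words_def dest: fp_step_Cons)
  then show ?case using step.IH by (metis equivclp_into_equivclp)
qed simp

lemma set_lmult_letter: "fst ` set (lmult_letter G x r) \<subseteq> insert (fst x) (fst ` set r)"
  by (cases r) (auto simp: lmult_letter_def split: if_splits)

lemma set_reduce: "fst ` set (reduce G xs) \<subseteq> fst ` set xs"
proof (induction xs)
  case (Cons x xs)
  have "fst ` set (reduce G (x # xs)) \<subseteq> insert (fst x) (fst ` set (reduce G xs))"
    using set_lmult_letter[of G x "reduce G xs"] by simp
  also have "\<dots> \<subseteq> fst ` set (x # xs)"
    using Cons.IH by auto
  finally show ?case .
qed simp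

context group_family
begin

lemma reduce_fp_step:
  assumes "fp_step G xs ys" "is_word G xs"
  shows "reduce G xs = reduce G ys \<and> is_word G ys"
  using assms
proof cases
  case (merge as n g h bs)
  then have g: "g \<in> carrier (G n)" and h: "h \<in> carrier (G n)" and bs: "is_word G bs"
    using assms(2) by auto
  have "lmult_letter G (n, g) (lmult_letter G (n, h) (reduce G bs))
      = lmult_letter G (n, g \<otimes>\<^bsub>G n\<^esub> h) (reduce G bs)"
    by (rule lmult_letter_lmult_letter[OF reduced_reduce[OF bs] g h])
  then show ?thesis
    using merge assms(2) g h by (simp add: reduce_append group.is_monoid[OF group_factor] monoid.m_closed)
qed (use assms(2) in \<open>simp add: reduce_append\<close>)

lemma reduce_in_fp_words: "xs \<in> fp_words G I \<Longrightarrow> reduce G xs \<in> fp_words G I"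
  using is_word_reduce set_reduce by (fastforce simp: fp_words_iff)

lemma fp_eq_lmult_letter:
  assumes r: "reduced_word G r" "r \<in> fp_words G I" and x: "[x] \<in> fp_words G I"
  shows "fp_eq G I (x # r) (lmult_letter G x r)"
proof -
  obtain n g where x_eq: "x = (n, g)" by (cases x)
  interpret grp: group "G n" by (rule group_factor)
  have g: "g \<in> carrier (G n)" using x x_eq by (auto simp: fp_words_iff)
  have xr: "x # r \<in> fp_words G I" using x r by (auto simp: fp_words_iff)
  consider "g = \<one>\<^bsub>G n\<^esub>" | "r = []" "g \<noteq> \<one>\<^bsub>G n\<^esub>"
    | y r' where "r = y # r'" "fst y \<noteq> n" "g \<noteq> \<one>\<^bsub>G n\<^esub>"
    | h r' where "r = (n, h) # r'" "g \<noteq> \<one>\<^bsub>G n\<^esub>"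
  proof (cases r)
    case (Cons y r')
    then show ?thesis using that by (cases y) (cases "fst y = n", auto)
  qed (use that in blast)
  then show ?thesis
  proof cases
    case 1
    then have "fp_rel G I (x # r) r"
      using fp_step.delete[of G "[]" n r] x_eq xr r by (simp add: fp_rel_def)
    then show ?thesis using 1 x_eq by (auto simp: fp_eq_def)
  next
    case 4
    have h: "h \<in> carrier (G n)" using r 4 by auto
    have merged: "(n, g \<otimes>\<^bsub>G n\<^esub> h) # r' \<in> fp_words G I"
      using xr 4 g h by (auto simp: fp_words_iff)
    have merge: "fp_rel G I (x # r) ((n, g \<otimes>\<^bsub>G n\<^esub> h) # r')"
      using fp_step.merge[of G "[]" n g h r'] xr merged x_eq 4 by (simp add: fp_rel_def)
    show ?thesis
    proof (cases "g \<otimes>\<^bsub>G n\<^esub> h = \<one>\<^bsub>G n\<^esub>")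
      case True
      have "fp_rel G I ((n, g \<otimes>\<^bsub>G n\<^esub> h) # r') r'"
        using fp_step.delete[of G "[]" n r'] True merged by (simp add: fp_rel_def fp_words_iff)
      with merge have "fp_eq G I (x # r) r'"
        unfolding fp_eq_def by (meson equivclp_trans r_into_equivclp)
      then show ?thesis using True x_eq 4 by (simp add: lmult_letter_def)
    next
      case False
      then show ?thesis using merge x_eq 4 by (auto simp: lmult_letter_def fp_eq_def)
    qed
  qed (use x_eq in \<open>auto simp: lmult_letter_def fp_eq_def\<close>)
qed

lemma fp_eq_reduce: "xs \<in> fp_words G I \<Longrightarrow> fp_eq G I xs (reduce G xs)"
proof (induction xs)
  case (Cons x xs)
  have xs: "xs \<in> fp_words G I" and x: "[x] \<in> fp_words G I"
    using Cons.prems by (auto simp: fp_words_iff)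
  have "fp_eq G I (x # xs) (x # reduce G xs)"
    by (rule fp_eq_Cons[OF Cons.IH[OF xs] x])
  moreover have "fp_eq G I (x # reduce G xs) (lmult_letter G x (reduce G xs))"
    using xs x by (intro fp_eq_lmult_letter reduced_reduce reduce_in_fp_words) (auto simp: fp_words_iff)
  ultimately show ?case
    unfolding fp_eq_def by (simp add: equivclp_trans)
qed (simp add: fp_eq_def)

text \<open>A word outside \<open>fp_words G I\<close> is related only to itself.\<close>

theorem fp_eq_iff_reduce:
  "fp_eq G I xs ys \<longleftrightarrow> xs = ys \<or> (xs \<in> fp_words G I \<and> ys \<in> fp_words G I \<and> reduce G xs = reduce G ys)"
proof
  assume "fp_eq G I xs ys"
  then show "xs = ys \<or> (xs \<in> fp_words G I \<and> ys \<in> fp_words G I \<and> reduce G xs = reduce G ys)"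
    unfolding fp_eq_def
  proof (induction rule: equivclp_induct)
    case (step y z)
    then have "y \<in> fp_words G I" "z \<in> fp_words G I" "fp_step G y z \<or> fp_step G z y"
      by (auto simp: fp_rel_def)
    then have "reduce G y = reduce G z"
      using reduce_fp_step[of y z] reduce_fp_step[of z y] by (auto simp: fp_words_iff)
    with step.IH \<open>y \<in> fp_words G I\<close> \<open>z \<in> fp_words G I\<close> show ?case by auto
  qed simp
next
  assume "xs = ys \<or> (xs \<in> fp_words G I \<and> ys \<in> fp_words G I \<and> reduce G xs = reduce G ys)"
  then show "fp_eq G I xs ys"
    using fp_eq_reduce[of xs I] fp_eq_reduce[of ys I]
    unfolding fp_eq_def by (metis equivclp_refl equivclp_sym equivclp_trans)
qed

lemma reduce_filter_lmult_letter:
  assumes r: "reduced_word G r" and x: "snd x \<in> carrier (G (fst x))"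
  shows "reduce G (filter (\<lambda>l. Q (fst l)) (lmult_letter G x r)) =
    (if Q (fst x) then lmult_letter G x (reduce G (filter (\<lambda>l. Q (fst l)) r))
     else reduce G (filter (\<lambda>l. Q (fst l)) r))"
proof -
  obtain n g where x_eq: "x = (n, g)" by (cases x)
  have g: "g \<in> carrier (G n)" using x x_eq by simp
  consider "g = \<one>\<^bsub>G n\<^esub>" | "r = []" | y r' where "r = y # r'" "fst y \<noteq> n" "g \<noteq> \<one>\<^bsub>G n\<^esub>"
    | h r' where "r = (n, h) # r'" "g \<noteq> \<one>\<^bsub>G n\<^esub>"
  proof (cases r)
    case (Cons y r')
    then show ?thesis using that by (cases y) (cases "fst y = n", auto)
  qed (use that in blast)
  then show ?thesis
  proof cases
    case 4
    have h: "h \<in> carrier (G n)" and r': "reduced_word G r'" using r 4 by auto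
    have "is_word G (filter (\<lambda>l. Q (fst l)) r')"
      by (rule is_word_filter[OF reduced_word_imp_is_word[OF r']])
    then have "lmult_letter G (n, g) (lmult_letter G (n, h) (reduce G (filter (\<lambda>l. Q (fst l)) r')))
        = lmult_letter G (n, g \<otimes>\<^bsub>G n\<^esub> h) (reduce G (filter (\<lambda>l. Q (fst l)) r'))"
      by (rule lmult_letter_lmult_letter[OF reduced_reduce g h])
    then show ?thesis using 4 x_eq by (simp add: lmult_letter_def)
  qed (use x_eq in \<open>simp_all add: lmult_letter_def\<close>)
qed

lemma reduce_filter_reduce:
  "is_word G xs \<Longrightarrow> reduce G (filter (\<lambda>l. Q (fst l)) (reduce G xs)) = reduce G (filter (\<lambda>l. Q (fst l)) xs)"
proof (induction xs)
  case (Cons x xs)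
  then show ?case
    using reduce_filter_lmult_letter[OF reduced_reduce, of xs x Q] by simp
qed simp

end

section \<open>Infinite words\<close>

lemma sorted_list_of_set_eqI:
  assumes "finite A" "sorted_wrt (<) xs" "set xs = A"
  shows "sorted_list_of_set A = xs"
  using assms strict_sorted_equal[of xs "sorted_list_of_set A"]
  by (simp add: sorted_list_of_set.strict_sorted_key_list_of_set)

lemma sorted_list_of_set_filter:
  "finite A \<Longrightarrow> sorted_list_of_set {x\<in>A. Q x} = filter Q (sorted_list_of_set A)"
  by (rule sorted_list_of_set_eqI) (auto intro: sorted_wrt_filter)

lemma sorted_list_of_set_image_strict_mono:
  assumes "finite A" "strict_mono_on A f"
  shows "sorted_list_of_set (f ` A) = map f (sorted_list_of_set A)"
proof (rule sorted_list_of_set_eqI)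
  show "sorted_wrt (<) (map f (sorted_list_of_set A))"
    unfolding sorted_wrt_map
    using sorted_wrt_mono_rel[OF _ strict_sorted_list_of_set[of A]] assms
    by (auto simp: strict_mono_on_def)
qed (use assms in auto)

lemma sorted_list_of_set_Un_less:
  assumes "finite A" "finite B" "\<forall>a\<in>A. \<forall>b\<in>B. a < b"
  shows "sorted_list_of_set (A \<union> B) = sorted_list_of_set A @ sorted_list_of_set B"
  by (rule sorted_list_of_set_eqI) (use assms in \<open>auto simp: sorted_wrt_append\<close>)

lemma sorted_list_of_set_uminus:
  fixes A :: "'a::linordered_ab_group_add set"
  assumes "finite A"
  shows "sorted_list_of_set (uminus ` A) = rev (map uminus (sorted_list_of_set A))"
proof (rule sorted_list_of_set_eqI)
  show "sorted_wrt (<) (rev (map uminus (sorted_list_of_set A)))"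
    unfolding sorted_wrt_rev sorted_wrt_map
    using strict_sorted_list_of_set[of A] by (simp add: sorted_wrt_mono_rel)
qed (use assms in auto)

definition iword_positions :: "nat set \<Rightarrow> 'a iword \<Rightarrow> rat set" where
  "iword_positions S W = {x \<in> fst W. fst (snd W x) \<in> S}"

definition iword_restrict :: "nat set \<Rightarrow> 'a iword \<Rightarrow> (nat \<times> 'a) list" where
  "iword_restrict S W = map (snd W) (sorted_list_of_set (iword_positions S W))"

definition iword_inv :: "(nat \<Rightarrow> ('a, 'c) monoid_scheme) \<Rightarrow> 'a iword \<Rightarrow> 'a iword" where
  "iword_inv G W =
     (uminus ` fst W, \<lambda>x. (fst (snd W (-x)), inv\<^bsub>G (fst (snd W (-x)))\<^esub> snd (snd W (-x))))"

definition iword_empty :: "'a iword" where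
  "iword_empty = ({}, \<lambda>_. undefined)"

definition iword_sub :: "'a iword \<Rightarrow> rat set \<Rightarrow> 'a iword" where
  "iword_sub W B = (fst W \<inter> B, snd W)"

lemma iword_restr_eq_restrict: "iword_restr m W = iword_restrict {..<m} W"
  by (simp add: iword_restr_def iword_restrict_def iword_positions_def)

lemma is_iword_iff_positions:
  "is_iword G W \<longleftrightarrow>
     (\<forall>x \<in> fst W. snd (snd W x) \<in> carrier (G (fst (snd W x)))
                \<and> snd (snd W x) \<noteq> \<one>\<^bsub>G (fst (snd W x))\<^esub>)
   \<and> (\<forall>n. finite (iword_positions {n} W))"
  by (simp add: is_iword_def iword_positions_def)

lemma finite_iword_positions:
  assumes "is_iword G W" "finite S"
  shows "finite (iword_positions S W)"
proof -
  have "iword_positions S W = (\<Union>n\<in>S. {x \<in> fst W. fst (snd W x) = n})"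
    by (auto simp: iword_positions_def)
  then show ?thesis using assms by (auto simp: is_iword_def)
qed

lemma iword_restrict_in_fp_words:
  assumes "is_iword G W" "finite S"
  shows "iword_restrict S W \<in> fp_words G S"
  using assms finite_iword_positions[OF assms]
  unfolding iword_restrict_def fp_words_iff is_iword_def is_word_def iword_positions_def
  by auto

lemma is_word_iword_restrict:
  "is_iword G W \<Longrightarrow> finite S \<Longrightarrow> is_word G (iword_restrict S W)"
  using iword_restrict_in_fp_words[of G W S] by (simp add: fp_words_iff)

lemma iword_restrict_letters:
  "finite (iword_positions S W) \<Longrightarrow> l \<in> set (iword_restrict S W) \<Longrightarrow>
    \<exists>x\<in>iword_positions S W. l = snd W x"
  by (auto simp: iword_restrict_def)

lemma iword_restrict_subset:
  assumes "is_iword G W" "finite S'" "S \<subseteq> S'"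
  shows "iword_restrict S W = filter (\<lambda>l. fst l \<in> S) (iword_restrict S' W)"
proof -
  have "iword_positions S W = {x \<in> iword_positions S' W. fst (snd W x) \<in> S}"
    using assms(3) by (auto simp: iword_positions_def)
  then show ?thesis
    unfolding iword_restrict_def using finite_iword_positions[OF assms(1,2)]
    by (simp add: sorted_list_of_set_filter filter_map comp_def)
qed

lemma neg_emb_less_0 [simp]: "neg_emb q < 0"
  by (auto simp: neg_emb_def)

lemma pos_emb_greater_0 [simp]: "pos_emb q > 0"
  using neg_emb_less_0[of "-q"] by (simp add: pos_emb_def)

lemma not_pos_emb_less_0 [simp]: "\<not> pos_emb q < 0"
  using pos_emb_greater_0[of q] by linarith

lemma strict_mono_neg_emb: "strict_mono neg_emb"
proof (rule strict_monoI)
  fix x y :: rat assume "x < y"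
  moreover have "x \<le> 0 \<Longrightarrow> 0 < y \<Longrightarrow> x * y \<le> 0" by (simp add: mult_nonpos_nonneg)
  ultimately show "neg_emb x < neg_emb y"
    by (auto simp: neg_emb_def field_simps)
qed

lemma strict_mono_pos_emb: "strict_mono pos_emb"
  using strict_mono_neg_emb by (auto simp: strict_mono_def pos_emb_def)

lemma neg_emb_inv_neg_emb [simp]: "neg_emb_inv (neg_emb q) = q"
  by (auto simp: neg_emb_def neg_emb_inv_def field_simps)

lemma pos_emb_inv_pos_emb [simp]: "pos_emb_inv (pos_emb q) = q"
  by (simp add: pos_emb_def pos_emb_inv_def)

lemma snd_iword_concat_neg_emb [simp]: "snd (iword_concat W V) (neg_emb q) = snd W q"
  by (simp add: iword_concat_def)

lemma snd_iword_concat_pos_emb [simp]: "snd (iword_concat W V) (pos_emb q) = snd V q"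
  using pos_emb_greater_0[of q] by (simp add: iword_concat_def)

lemma iword_positions_concat:
  "iword_positions S (iword_concat W V) = neg_emb ` iword_positions S W \<union> pos_emb ` iword_positions S V"
  by (auto simp: iword_positions_def iword_concat_def)

lemma iword_restrict_concat:
  assumes "is_iword G W" "is_iword G V" "finite S"
  shows "iword_restrict S (iword_concat W V) = iword_restrict S W @ iword_restrict S V"
proof -
  have fin: "finite (iword_positions S W)" "finite (iword_positions S V)"
    using finite_iword_positions assms by blast+
  have "\<forall>a\<in>neg_emb ` iword_positions S W. \<forall>b\<in>pos_emb ` iword_positions S V. a < b"
    using neg_emb_less_0 pos_emb_greater_0 less_trans by blast
  then have "sorted_list_of_set (iword_positions S (iword_concat W V)) =
      map neg_emb (sorted_list_of_set (iword_positions S W))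
      @ map pos_emb (sorted_list_of_set (iword_positions S V))"
    unfolding iword_positions_concat using fin strict_mono_neg_emb strict_mono_pos_emb
    by (simp add: sorted_list_of_set_Un_less sorted_list_of_set_image_strict_mono strict_mono_on_def
        strict_mono_def)
  then show ?thesis
    unfolding iword_restrict_def by (simp add: comp_def)
qed

lemma is_iword_concat:
  assumes "is_iword G W" "is_iword G V"
  shows "is_iword G (iword_concat W V)"
  unfolding is_iword_iff_positions iword_positions_concat
  using assms finite_iword_positions[OF assms(1)] finite_iword_positions[OF assms(2)]
  by (auto simp: is_iword_def iword_concat_def)

lemma iword_positions_inv: "iword_positions S (iword_inv G W) = uminus ` iword_positions S W"
  by (force simp: iword_positions_def iword_inv_def)

lemma iword_restrict_inv:
  assumes "is_iword G W" "finite S"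
  shows "iword_restrict S (iword_inv G W) = inv_word G (iword_restrict S W)"
  unfolding iword_restrict_def iword_positions_inv inv_word_def
    sorted_list_of_set_uminus[OF finite_iword_positions[OF assms]]
  by (simp add: rev_map comp_def iword_inv_def)

lemma iword_restrict_empty [simp]: "iword_restrict S iword_empty = []"
  by (simp add: iword_restrict_def iword_positions_def iword_empty_def)

lemma is_iword_empty: "is_iword G iword_empty"
  by (simp add: is_iword_def iword_empty_def)

lemma is_iword_sub: "is_iword G W \<Longrightarrow> is_iword G (iword_sub W B)"
  by (auto simp: is_iword_def iword_sub_def intro: finite_subset[rotated])

lemma iword_positions_sub: "iword_positions S (iword_sub W B) = iword_positions S W \<inter> B"
  by (auto simp: iword_positions_def iword_sub_def)

lemma iword_eq_restrictI:
  "(\<And>m. iword_restrict {..<m} W = iword_restrict {..<m} V) \<Longrightarrow> iword_eq G W V"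
  by (simp add: iword_eq_def iword_restr_eq_restrict fp_eq_def)

lemma iword_eq_refl: "iword_eq G W W"
  by (simp add: iword_eq_def fp_eq_def)

lemma iword_eq_sym: "iword_eq G W V \<Longrightarrow> iword_eq G V W"
  unfolding iword_eq_def fp_eq_def by (blast intro: equivclp_sym)

lemma iword_eq_trans: "iword_eq G W V \<Longrightarrow> iword_eq G V U \<Longrightarrow> iword_eq G W U"
  unfolding iword_eq_def fp_eq_def by (blast intro: equivclp_trans)

context group_family
begin

lemma is_iword_inv:
  assumes W: "is_iword G W"
  shows "is_iword G (iword_inv G W)"
  unfolding is_iword_iff_positions iword_positions_inv
proof (rule conjI; intro ballI allI)
  fix x assume "x \<in> fst (iword_inv G W)"
  then obtain q where q: "q \<in> fst W" "x = - q" by (auto simp: iword_inv_def)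
  obtain n g where e: "snd W q = (n, g)" by (cases "snd W q")
  interpret grp: group "G n" by (rule group_factor)
  have g: "g \<in> carrier (G n)" "g \<noteq> \<one>\<^bsub>G n\<^esub>" using W q e by (auto simp: is_iword_def)
  then have "inv\<^bsub>G n\<^esub> g \<noteq> \<one>\<^bsub>G n\<^esub>" by (metis grp.inv_inv grp.inv_one)
  then show "snd (snd (iword_inv G W) x) \<in> carrier (G (fst (snd (iword_inv G W) x)))
    \<and> snd (snd (iword_inv G W) x) \<noteq> \<one>\<^bsub>G (fst (snd (iword_inv G W) x))\<^esub>"
    using q e g by (simp add: iword_inv_def)
qed (use finite_iword_positions[OF W] in simp)

lemma iword_eq_iff_reduce:
  assumes "is_iword G W" "is_iword G V"
  shows "iword_eq G W V \<longleftrightarrow>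
    (\<forall>m. reduce G (iword_restrict {..<m} W) = reduce G (iword_restrict {..<m} V))"
proof -
  have "fp_eq G {..<m} (iword_restrict {..<m} W) (iword_restrict {..<m} V) \<longleftrightarrow>
      reduce G (iword_restrict {..<m} W) = reduce G (iword_restrict {..<m} V)" for m
    using fp_eq_iff_reduce iword_restrict_in_fp_words[OF assms(1)] iword_restrict_in_fp_words[OF assms(2)]
    by auto
  then show ?thesis by (simp add: iword_eq_def iword_restr_eq_restrict)
qed

lemma iword_eq_reduce_restrict:
  assumes W: "is_iword G W" and V: "is_iword G V" and eq: "iword_eq G W V" and S: "finite S"
  shows "reduce G (iword_restrict S W) = reduce G (iword_restrict S V)"
proof -
  obtain m where m: "S \<subseteq> {..<m}" using S finite_nat_bounded by blast
  have "reduce G (iword_restrict S W)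
      = reduce G (filter (\<lambda>l. fst l \<in> S) (reduce G (iword_restrict {..<m} W)))"
    using iword_restrict_subset[OF W _ m]
      reduce_filter_reduce[OF is_word_iword_restrict[OF W finite_lessThan], of "\<lambda>n. n \<in> S"] by simp
  also have "\<dots> = reduce G (filter (\<lambda>l. fst l \<in> S) (reduce G (iword_restrict {..<m} V)))"
    using iword_eq_iff_reduce[OF W V] eq by simp
  also have "\<dots> = reduce G (iword_restrict S V)"
    using iword_restrict_subset[OF V _ m]
      reduce_filter_reduce[OF is_word_iword_restrict[OF V finite_lessThan], of "\<lambda>n. n \<in> S"] by simp
  finally show ?thesis .
qed

end

section \<open>The topologist's product\<close>

lemma mem_iword_class: "V \<in> iword_class G W \<longleftrightarrow> is_iword G V \<and> iword_eq G W V"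
  by (simp add: iword_class_def)

lemma iword_class_eq_iff:
  assumes "is_iword G W" "is_iword G V"
  shows "iword_class G W = iword_class G V \<longleftrightarrow> iword_eq G W V"
  using assms iword_eq_refl iword_eq_sym iword_eq_trans
  unfolding iword_class_def by blast

lemma carrier_topologists_product:
  "carrier (topologists_product G) = iword_class G ` {W. is_iword G W}"
  by (simp add: topologists_product_def)

lemma one_topologists_product: "\<one>\<^bsub>topologists_product G\<^esub> = iword_class G iword_empty"
  by (simp add: topologists_product_def iword_empty_def)

lemma iword_class_in_carrier: "is_iword G W \<Longrightarrow> iword_class G W \<in> carrier (topologists_product G)"
  by (simp add: carrier_topologists_product)

lemma iword_concat_assoc:
  assumes "is_iword G W" "is_iword G V" "is_iword G U"
  shows "iword_eq G (iword_concat (iword_concat W V) U) (iword_concat W (iword_concat V U))"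
  by (rule iword_eq_restrictI)
    (simp add: iword_restrict_concat[OF is_iword_concat[OF assms(1,2)] assms(3)]
      iword_restrict_concat[OF assms(1) is_iword_concat[OF assms(2,3)]]
      iword_restrict_concat[OF assms(1,2)] iword_restrict_concat[OF assms(2,3)])

lemma iword_empty_concat: "is_iword G W \<Longrightarrow> iword_eq G (iword_concat iword_empty W) W"
  by (rule iword_eq_restrictI) (simp add: iword_restrict_concat[OF is_iword_empty])

context group_family
begin

lemma iword_eq_concat:
  assumes W: "is_iword G W" "is_iword G W'" and V: "is_iword G V" "is_iword G V'"
    and eq: "iword_eq G W W'" "iword_eq G V V'"
  shows "iword_eq G (iword_concat W V) (iword_concat W' V')"
proof -
  have "reduce G (iword_restrict {..<m} (iword_concat W V))
      = reduce G (iword_restrict {..<m} (iword_concat W' V'))" for m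
  proof -
    have "reduce G (iword_restrict {..<m} (iword_concat W V))
        = reduce G (reduce G (iword_restrict {..<m} W) @ reduce G (iword_restrict {..<m} V))"
      using W V by (simp add: iword_restrict_concat reduce_append_reduce is_word_iword_restrict)
    also have "\<dots> = reduce G (reduce G (iword_restrict {..<m} W') @ reduce G (iword_restrict {..<m} V'))"
      using iword_eq_reduce_restrict W V eq by simp
    also have "\<dots> = reduce G (iword_restrict {..<m} (iword_concat W' V'))"
      using W V by (simp add: iword_restrict_concat reduce_append_reduce is_word_iword_restrict)
    finally show ?thesis .
  qed
  then show ?thesis
    using iword_eq_iff_reduce is_iword_concat W V by blast
qed

lemma mult_topologists_product:
  assumes "is_iword G W" "is_iword G V"
  shows "iword_class G W \<otimes>\<^bsub>topologists_product G\<^esub> iword_class G V = iword_class G (iword_concat W V)"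
proof -
  have "W \<in> iword_class G W" "V \<in> iword_class G V"
    using assms by (simp_all add: mem_iword_class iword_eq_refl)
  moreover have "iword_eq G (iword_concat W V) U"
    if "W' \<in> iword_class G W" "V' \<in> iword_class G V" "iword_eq G (iword_concat W' V') U" for W' V' U
  proof -
    have "iword_eq G (iword_concat W V) (iword_concat W' V')"
      using that(1,2) iword_eq_concat[OF assms(1) _ assms(2)] by (simp add: mem_iword_class)
    then show ?thesis using that(3) by (rule iword_eq_trans)
  qed
  ultimately have "is_iword G U \<and> (\<exists>W'\<in>iword_class G W. \<exists>V'\<in>iword_class G V.
      iword_eq G (iword_concat W' V') U) \<longleftrightarrow> U \<in> iword_class G (iword_concat W V)" for U
    unfolding mem_iword_class[of U] by blast
  then show ?thesis
    by (auto simp: topologists_product_def)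
qed

lemma iword_inv_concat:
  assumes "is_iword G W"
  shows "iword_eq G (iword_concat (iword_inv G W) W) iword_empty"
proof -
  have "reduce G (iword_restrict {..<m} (iword_concat (iword_inv G W) W)) = []" for m
    using assms
    by (simp add: iword_restrict_concat[OF is_iword_inv] iword_restrict_inv reduce_inv_word_append
        is_word_iword_restrict)
  then show ?thesis
    using iword_eq_iff_reduce[OF is_iword_concat[OF is_iword_inv[OF assms] assms] is_iword_empty] by simp
qed

lemma group_topologists_product: "group (topologists_product G)"
proof (rule groupI)
  fix x y assume "x \<in> carrier (topologists_product G)" "y \<in> carrier (topologists_product G)"
  then show "x \<otimes>\<^bsub>topologists_product G\<^esub> y \<in> carrier (topologists_product G)"
    by (auto simp: carrier_topologists_product mult_topologists_product is_iword_concat)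
next
  show "\<one>\<^bsub>topologists_product G\<^esub> \<in> carrier (topologists_product G)"
    by (simp add: one_topologists_product iword_class_in_carrier is_iword_empty)
next
  fix x y z
  assume "x \<in> carrier (topologists_product G)" "y \<in> carrier (topologists_product G)"
    "z \<in> carrier (topologists_product G)"
  then obtain W V U where "is_iword G W" "is_iword G V" "is_iword G U"
    and "x = iword_class G W" "y = iword_class G V" "z = iword_class G U"
    by (auto simp: carrier_topologists_product)
  then show "x \<otimes>\<^bsub>topologists_product G\<^esub> y \<otimes>\<^bsub>topologists_product G\<^esub> z
      = x \<otimes>\<^bsub>topologists_product G\<^esub> (y \<otimes>\<^bsub>topologists_product G\<^esub> z)"
    by (simp add: mult_topologists_product is_iword_concat iword_class_eq_iff iword_concat_assoc)
next
  fix x assume "x \<in> carrier (topologists_product G)"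
  then obtain W where "is_iword G W" "x = iword_class G W"
    by (auto simp: carrier_topologists_product)
  then show "\<one>\<^bsub>topologists_product G\<^esub> \<otimes>\<^bsub>topologists_product G\<^esub> x = x"
    by (simp add: one_topologists_product mult_topologists_product is_iword_empty is_iword_concat
        iword_class_eq_iff iword_empty_concat)
next
  fix x assume "x \<in> carrier (topologists_product G)"
  then obtain W where W: "is_iword G W" "x = iword_class G W"
    by (auto simp: carrier_topologists_product)
  then have "iword_class G (iword_inv G W) \<otimes>\<^bsub>topologists_product G\<^esub> x = \<one>\<^bsub>topologists_product G\<^esub>"
    by (simp add: one_topologists_product mult_topologists_product is_iword_inv is_iword_empty
        is_iword_concat iword_class_eq_iff iword_inv_concat)
  then show "\<exists>y\<in>carrier (topologists_product G). y \<otimes>\<^bsub>topologists_product G\<^esub> x = \<one>\<^bsub>topologists_product G\<^esub>"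
    using W(1) is_iword_inv iword_class_in_carrier by blast
qed

lemma inv_topologists_product:
  assumes "is_iword G W"
  shows "inv\<^bsub>topologists_product G\<^esub> (iword_class G W) = iword_class G (iword_inv G W)"
proof -
  interpret T: group "topologists_product G" by (rule group_topologists_product)
  have "iword_class G (iword_inv G W) \<otimes>\<^bsub>topologists_product G\<^esub> iword_class G W
      = \<one>\<^bsub>topologists_product G\<^esub>"
    using assms
    by (simp add: one_topologists_product mult_topologists_product is_iword_inv is_iword_empty
        is_iword_concat iword_class_eq_iff iword_inv_concat)
  then show ?thesis
    using T.inv_equality assms is_iword_inv iword_class_in_carrier by blast
qed

end

section \<open>Normal closures and quotient groups\<close>

lemma subgroup_normal_closure:
  assumes "group K" "S \<subseteq> carrier K"
  shows "subgroup (normal_closure K S) K"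
proof -
  interpret group K by (rule assms(1))
  show ?thesis
    unfolding normal_closure_def by (rule generate_is_subgroup) (use assms(2) in auto)
qed

lemma normal_closure_subset_normal:
  assumes "group K" "N \<lhd> K" "S \<subseteq> N"
  shows "normal_closure K S \<subseteq> N"
  unfolding normal_closure_def
proof (rule group.generate_subgroup_incl[OF assms(1)])
  interpret N: normal N K by (rule assms(2))
  show "{g \<otimes>\<^bsub>K\<^esub> s \<otimes>\<^bsub>K\<^esub> inv\<^bsub>K\<^esub> g |g s. g \<in> carrier K \<and> s \<in> S} \<subseteq> N"
    using assms(3) N.inv_op_closed2 by blast
qed (use assms(2) in \<open>simp add: normal_def\<close>)

lemma embeds_quotient_group:
  assumes K: "group K" and K': "group K'" and f: "f \<in> hom K K'" and N': "N' \<lhd> K'"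
    and N: "N = {a \<in> carrier K. f a \<in> N'}"
  shows "embeds (K Mod N) (K' Mod N')"
proof -
  interpret K': normal N' K' by (rule N')
  define h where "h = r_coset K' N' \<circ> f"
  have "h \<in> hom K (K' Mod N')"
    unfolding h_def by (rule hom_compose[OF f K'.r_coset_hom_Mod])
  then interpret h: group_hom K "K' Mod N'" h
    by (intro group_hom.intro group_hom_axioms.intro K K'.factorgroup_is_group)
  have "h a = N' \<longleftrightarrow> f a \<in> N'" if a: "a \<in> carrier K" for a
  proof -
    have "f a \<in> carrier K'" using f a by (simp add: hom_def Pi_def)
    then show ?thesis
      using K'.coset_join1[OF _ _ K'.subgroup_axioms] K'.coset_join2[OF _ K'.subgroup_axioms]
      by (auto simp: h_def)
  qed
  then have "kernel K (K' Mod N') h = N"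
    by (auto simp: kernel_def N)
  then show ?thesis
    unfolding embeds_def using h.FactGroup_hom h.FactGroup_inj_on by metis
qed

section \<open>The normal closure of the free product\<close>

definition trivial_without :: "(nat \<Rightarrow> ('a, 'c) monoid_scheme) \<Rightarrow> nat set \<Rightarrow> 'a iword \<Rightarrow> bool" where
  "trivial_without G F W \<longleftrightarrow> (\<forall>m. reduce G (filter (\<lambda>l. fst l \<notin> F) (iword_restrict {..<m} W)) = [])"

text \<open>By \<open>normal_closure_free_part\<close> this is the normal closure of the free product.\<close>

definition finitely_trivial :: "(nat \<Rightarrow> ('a, 'c) monoid_scheme) \<Rightarrow> 'a iword set set" where
  "finitely_trivial G =
    {a \<in> carrier (topologists_product G).
       \<exists>W F. is_iword G W \<and> a = iword_class G W \<and> finite F \<and> trivial_without G F W}"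

lemma iword_restrict_split:
  assumes W: "is_iword G W" and S: "finite S"
  shows "iword_restrict S W = iword_restrict S (iword_sub W {y. y < x})
    @ iword_restrict S (iword_sub W {x}) @ iword_restrict S (iword_sub W {y. x < y})"
proof -
  let ?A = "iword_positions S W"
  have fin: "finite ?A" by (rule finite_iword_positions[OF W S])
  have "sorted_list_of_set ?A
      = sorted_list_of_set (?A \<inter> {y. y < x} \<union> (?A \<inter> {x} \<union> ?A \<inter> {y. x < y}))"
    by (rule arg_cong[where f = sorted_list_of_set]) auto
  also have "\<dots> = sorted_list_of_set (?A \<inter> {y. y < x})
      @ sorted_list_of_set (?A \<inter> {x} \<union> ?A \<inter> {y. x < y})"
    by (rule sorted_list_of_set_Un_less) (use fin in auto)
  also have "sorted_list_of_set (?A \<inter> {x} \<union> ?A \<inter> {y. x < y})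
      = sorted_list_of_set (?A \<inter> {x}) @ sorted_list_of_set (?A \<inter> {y. x < y})"
    by (rule sorted_list_of_set_Un_less) (use fin in auto)
  finally have "sorted_list_of_set ?A = sorted_list_of_set (?A \<inter> {y. y < x})
      @ sorted_list_of_set (?A \<inter> {x}) @ sorted_list_of_set (?A \<inter> {y. x < y})" .
  then show ?thesis
    unfolding iword_restrict_def iword_positions_sub by (simp add: iword_sub_def)
qed

lemma filter_iword_restrict_eq_self:
  assumes "is_iword G W" "finite S" "iword_positions F W = {}"
  shows "filter (\<lambda>l. fst l \<notin> F) (iword_restrict S W) = iword_restrict S W"
  using assms iword_restrict_letters[OF finite_iword_positions[OF assms(1,2)]]
  by (force simp: iword_positions_def intro: filter_True)

lemma filter_iword_restrict_eq_Nil: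
  assumes "is_iword G W" "finite S" "fst W \<subseteq> iword_positions F W"
  shows "filter (\<lambda>l. fst l \<notin> F) (iword_restrict S W) = []"
  using assms iword_restrict_letters[OF finite_iword_positions[OF assms(1,2)]]
  by (force simp: iword_positions_def intro: filter_False)

context group_family
begin

lemma trivial_without_iword_eq:
  assumes W: "is_iword G W" and V: "is_iword G V" and eq: "iword_eq G W V"
  shows "trivial_without G F W \<longleftrightarrow> trivial_without G F V"
proof -
  have "reduce G (filter (\<lambda>l. fst l \<notin> F) (iword_restrict {..<m} W))
      = reduce G (filter (\<lambda>l. fst l \<notin> F) (iword_restrict {..<m} V))" for m
    using iword_eq_reduce_restrict[OF W V eq finite_lessThan, of m]
      reduce_filter_reduce[OF is_word_iword_restrict[OF W finite_lessThan], of "\<lambda>n. n \<notin> F" m]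
      reduce_filter_reduce[OF is_word_iword_restrict[OF V finite_lessThan], of "\<lambda>n. n \<notin> F" m]
    by simp
  then show ?thesis by (simp add: trivial_without_def)
qed

lemma trivial_without_finite_restrict:
  assumes W: "is_iword G W" and t: "trivial_without G F W" and S: "finite S"
  shows "reduce G (filter (\<lambda>l. fst l \<notin> F) (iword_restrict S W)) = []"
proof -
  obtain m where m: "S \<subseteq> {..<m}" using S finite_nat_bounded by blast
  let ?xs = "filter (\<lambda>l. fst l \<notin> F) (iword_restrict {..<m} W)"
  have "filter (\<lambda>l. fst l \<notin> F) (iword_restrict S W) = filter (\<lambda>l. fst l \<in> S) ?xs"
    using iword_restrict_subset[OF W finite_lessThan m] by (simp add: conj_commute)
  moreover have "reduce G (filter (\<lambda>l. fst l \<in> S) ?xs) = reduce G (filter (\<lambda>l. fst l \<in> S) (reduce G ?xs))"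
    by (rule reduce_filter_reduce[symmetric])
      (rule is_word_filter[OF is_word_iword_restrict[OF W finite_lessThan]])
  ultimately show ?thesis
    using t by (simp add: trivial_without_def)
qed

lemma trivial_without_mono:
  assumes W: "is_iword G W" and t: "trivial_without G F W" and "F \<subseteq> F'"
  shows "trivial_without G F' W"
  unfolding trivial_without_def
proof
  fix m
  let ?xs = "filter (\<lambda>l. fst l \<notin> F) (iword_restrict {..<m} W)"
  have "filter (\<lambda>l. fst l \<notin> F') (iword_restrict {..<m} W) = filter (\<lambda>l. fst l \<notin> F') ?xs"
    using \<open>F \<subseteq> F'\<close> by (auto simp: filter_filter intro!: filter_cong)
  moreover have "reduce G (filter (\<lambda>l. fst l \<notin> F') ?xs) = reduce G (filter (\<lambda>l. fst l \<notin> F') (reduce G ?xs))"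
    by (rule reduce_filter_reduce[symmetric])
      (rule is_word_filter[OF is_word_iword_restrict[OF W finite_lessThan]])
  ultimately show "reduce G (filter (\<lambda>l. fst l \<notin> F') (iword_restrict {..<m} W)) = []"
    using t by (simp add: trivial_without_def)
qed

lemma trivial_without_concat:
  assumes U: "is_iword G U" and W: "is_iword G W"
    and "trivial_without G F U" "trivial_without G F W"
  shows "trivial_without G F (iword_concat U W)"
  using assms
  by (simp add: trivial_without_def iword_restrict_concat[of G] reduce_append_reduce[symmetric]
      is_word_filter is_word_iword_restrict)

lemma trivial_without_inv:
  assumes U: "is_iword G U" and t: "trivial_without G F U"
  shows "trivial_without G F (iword_inv G U)"
  unfolding trivial_without_def
proof
  fix m
  let ?xs = "filter (\<lambda>l. fst l \<notin> F) (iword_restrict {..<m} U)"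
  have "reduce G (inv_word G ?xs) = reduce G (inv_word G ?xs @ ?xs)"
    using t by (simp add: trivial_without_def reduce_append reduce_def)
  then show "reduce G (filter (\<lambda>l. fst l \<notin> F) (iword_restrict {..<m} (iword_inv G U))) = []"
    using iword_restrict_inv[OF U] filter_inv_word[of "\<lambda>n. n \<notin> F" G]
      reduce_inv_word_append[OF is_word_filter[OF is_word_iword_restrict[OF U finite_lessThan]]]
    by simp
qed

lemma trivial_without_conj:
  assumes U: "is_iword G U" and W: "is_iword G W" and t: "trivial_without G F W"
  shows "trivial_without G F (iword_concat (iword_concat U W) (iword_inv G U))"
  unfolding trivial_without_def
proof
  fix m
  let ?xs = "filter (\<lambda>l. fst l \<notin> F) (iword_restrict {..<m} U)"
    and ?ys = "filter (\<lambda>l. fst l \<notin> F) (iword_restrict {..<m} W)"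
  have xs: "is_word G ?xs" by (simp add: is_word_filter is_word_iword_restrict[OF U])
  have "reduce G (?xs @ ?ys @ inv_word G ?xs) = lmult_word G ?xs (lmult_word G ?ys (reduce G (inv_word G ?xs)))"
    by (simp add: reduce_def)
  also have "\<dots> = lmult_word G ?xs (reduce G (inv_word G ?xs))"
    using lmult_word_reduce[of ?ys "reduce G (inv_word G ?xs)"] t
    by (simp add: trivial_without_def reduced_reduce is_word_inv_word[OF xs] is_word_filter
        is_word_iword_restrict[OF W])
  also have "\<dots> = []"
    using lmult_word_cancel_inv_word[OF xs, of "[]"] by (simp add: reduce_def)
  finally show "reduce G (filter (\<lambda>l. fst l \<notin> F)
      (iword_restrict {..<m} (iword_concat (iword_concat U W) (iword_inv G U)))) = []"
    using U W
    by (simp add: iword_restrict_concat[of G] is_iword_concat is_iword_inv iword_restrict_inv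
        filter_inv_word[of "\<lambda>n. n \<notin> F" G])
qed

lemma finitely_trivial_iword_class:
  assumes "is_iword G W"
  shows "iword_class G W \<in> finitely_trivial G \<longleftrightarrow> (\<exists>F. finite F \<and> trivial_without G F W)"
proof
  assume "iword_class G W \<in> finitely_trivial G"
  then obtain V F where V: "is_iword G V" "iword_class G W = iword_class G V" "finite F"
    "trivial_without G F V"
    by (auto simp: finitely_trivial_def)
  then have "iword_eq G W V" using iword_class_eq_iff[OF assms V(1)] by simp
  then show "\<exists>F. finite F \<and> trivial_without G F W"
    using trivial_without_iword_eq[OF assms V(1)] V by blast
next
  assume "\<exists>F. finite F \<and> trivial_without G F W"
  then show "iword_class G W \<in> finitely_trivial G"
    using assms iword_class_in_carrier unfolding finitely_trivial_def by blast
qed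

lemma finitely_trivialE:
  assumes "a \<in> finitely_trivial G"
  obtains W F where "is_iword G W" "a = iword_class G W" "finite F" "trivial_without G F W"
  using assms by (auto simp: finitely_trivial_def)

lemma subgroup_finitely_trivial: "subgroup (finitely_trivial G) (topologists_product G)"
proof (rule group.subgroupI[OF group_topologists_product])
  show "finitely_trivial G \<subseteq> carrier (topologists_product G)"
    by (auto simp: finitely_trivial_def)
  have "trivial_without G {} iword_empty"
    by (simp add: trivial_without_def)
  then show "finitely_trivial G \<noteq> {}"
    using finitely_trivial_iword_class[OF is_iword_empty] by blast
next
  fix a assume "a \<in> finitely_trivial G"
  then show "inv\<^bsub>topologists_product G\<^esub> a \<in> finitely_trivial G"
    by (elim finitely_trivialE) (auto simp: inv_topologists_product is_iword_inv
        finitely_trivial_iword_class intro: trivial_without_inv)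
next
  fix a b assume "a \<in> finitely_trivial G" "b \<in> finitely_trivial G"
  then obtain W V F F' where W: "is_iword G W" "a = iword_class G W" "trivial_without G F W"
    and V: "is_iword G V" "b = iword_class G V" "trivial_without G F' V" and "finite (F \<union> F')"
    by (elim finitely_trivialE) blast
  then have "trivial_without G (F \<union> F') (iword_concat W V)"
    using trivial_without_mono[OF W(1) W(3)] trivial_without_mono[OF V(1) V(3)]
    by (intro trivial_without_concat) auto
  with W V \<open>finite (F \<union> F')\<close> show "a \<otimes>\<^bsub>topologists_product G\<^esub> b \<in> finitely_trivial G"
    by (auto simp: mult_topologists_product is_iword_concat finitely_trivial_iword_class)
qed

lemma finitely_trivial_conj:
  assumes g: "g \<in> carrier (topologists_product G)" and a: "a \<in> finitely_trivial G"
  shows "g \<otimes>\<^bsub>topologists_product G\<^esub> a \<otimes>\<^bsub>topologists_product G\<^esub> inv\<^bsub>topologists_product G\<^esub> g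
    \<in> finitely_trivial G"
proof -
  obtain U where U: "is_iword G U" "g = iword_class G U"
    using g by (auto simp: carrier_topologists_product)
  obtain W F where W: "is_iword G W" "a = iword_class G W" "finite F" "trivial_without G F W"
    using a by (rule finitely_trivialE)
  then have "trivial_without G F (iword_concat (iword_concat U W) (iword_inv G U))"
    using U(1) by (intro trivial_without_conj)
  with U W show ?thesis
    by (auto simp: inv_topologists_product mult_topologists_product is_iword_concat is_iword_inv
        finitely_trivial_iword_class)
qed

lemma normal_finitely_trivial: "finitely_trivial G \<lhd> topologists_product G"
  using group.normal_inv_iff[OF group_topologists_product] subgroup_finitely_trivial finitely_trivial_conj
  by blast

lemma free_part_subset_finitely_trivial: "free_part G \<subseteq> finitely_trivial G"
proof
  fix a assume "a \<in> free_part G"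
  then obtain W where W: "W \<in> a" "finite (fst W)" and a: "a \<in> carrier (topologists_product G)"
    by (auto simp: free_part_def)
  obtain W0 where W0: "is_iword G W0" "a = iword_class G W0"
    using a by (auto simp: carrier_topologists_product)
  have iw: "is_iword G W" "iword_eq G W0 W" using W(1) W0 by (auto simp: mem_iword_class)
  have aW: "a = iword_class G W" using iword_class_eq_iff[OF W0(1) iw(1)] iw W0 by simp
  define F where "F = (\<lambda>x. fst (snd W x)) ` fst W"
  have "fst W \<subseteq> iword_positions F W" by (auto simp: F_def iword_positions_def)
  then have "trivial_without G F W"
    using filter_iword_restrict_eq_Nil[OF iw(1) finite_lessThan] by (simp add: trivial_without_def)
  moreover have "finite F" using W(2) by (simp add: F_def)
  ultimately show "a \<in> finitely_trivial G"
    using finitely_trivial_iword_class[OF iw(1)] aW by blast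
qed

end

context group_family
begin

text \<open>Cutting \<open>W\<close> at a position \<open>x\<close> into \<open>L\<close>, the letter \<open>A\<close> at \<open>x\<close>, and \<open>R\<close>, we have
  \<open>W = LR \<cdot> R\<inverse>AR\<close>: the letter is moved out as a conjugate of an element of the free product.\<close>

lemma iword_class_split_conj:
  fixes x :: rat
  assumes W: "is_iword G W"
  defines "L \<equiv> iword_sub W {y. y < x}" and "A \<equiv> iword_sub W {x}" and "R \<equiv> iword_sub W {y. x < y}"
  shows "iword_class G W = iword_class G (iword_concat L R) \<otimes>\<^bsub>topologists_product G\<^esub>
    (inv\<^bsub>topologists_product G\<^esub> iword_class G R \<otimes>\<^bsub>topologists_product G\<^esub> iword_class G A
      \<otimes>\<^bsub>topologists_product G\<^esub> iword_class G R)"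
proof -
  interpret T: group "topologists_product G" by (rule group_topologists_product)
  have iw: "is_iword G L" "is_iword G A" "is_iword G R"
    using is_iword_sub[OF W] by (simp_all add: L_def A_def R_def)
  have cl: "iword_class G L \<in> carrier (topologists_product G)"
    "iword_class G A \<in> carrier (topologists_product G)"
    "iword_class G R \<in> carrier (topologists_product G)"
    using iw by (simp_all add: iword_class_in_carrier)
  have "iword_eq G (iword_concat (iword_concat L A) R) W"
  proof (rule iword_eq_restrictI)
    fix m
    show "iword_restrict {..<m} (iword_concat (iword_concat L A) R) = iword_restrict {..<m} W"
      using iword_restrict_split[OF W finite_lessThan, of m x]
      by (simp add: iword_restrict_concat[OF is_iword_concat[OF iw(1,2)] iw(3)]
          iword_restrict_concat[OF iw(1,2)] flip: L_def A_def R_def)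
  qed
  then have "iword_class G W = iword_class G L \<otimes>\<^bsub>topologists_product G\<^esub> iword_class G A
      \<otimes>\<^bsub>topologists_product G\<^esub> iword_class G R"
    using iword_class_eq_iff[OF is_iword_concat[OF is_iword_concat[OF iw(1,2)] iw(3)] W]
    by (simp add: mult_topologists_product iw is_iword_concat)
  also have "\<dots> = iword_class G L \<otimes>\<^bsub>topologists_product G\<^esub> iword_class G R
      \<otimes>\<^bsub>topologists_product G\<^esub> (inv\<^bsub>topologists_product G\<^esub> iword_class G R
        \<otimes>\<^bsub>topologists_product G\<^esub> iword_class G A \<otimes>\<^bsub>topologists_product G\<^esub> iword_class G R)"
  proof -
    have cancel: "iword_class G R \<otimes>\<^bsub>topologists_product G\<^esub> (inv\<^bsub>topologists_product G\<^esub> iword_class G R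
        \<otimes>\<^bsub>topologists_product G\<^esub> y) = y" if "y \<in> carrier (topologists_product G)" for y
      using cl(3) that by (simp add: T.m_assoc[symmetric])
    show ?thesis
      using cl by (simp add: T.m_assoc cancel)
  qed
  finally show ?thesis
    by (simp add: mult_topologists_product iw)
qed

lemma trivial_without_no_positions:
  assumes W: "is_iword G W" and "finite F" "trivial_without G F W" "iword_positions F W = {}"
  shows "iword_class G W = \<one>\<^bsub>topologists_product G\<^esub>"
proof -
  have "reduce G (iword_restrict {..<m} W) = []" for m
    using assms filter_iword_restrict_eq_self[OF W finite_lessThan] by (simp add: trivial_without_def)
  then show ?thesis
    using iword_eq_iff_reduce[OF W is_iword_empty] iword_class_eq_iff[OF W is_iword_empty]
    by (simp add: one_topologists_product)
qed

lemma trivial_without_peel_last: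
  assumes W: "is_iword G W" and F: "finite F" and t: "trivial_without G F W"
    and x: "x \<in> iword_positions F W" and x_max: "\<forall>y\<in>iword_positions F W. y \<le> x"
  obtains U c where "is_iword G U" "trivial_without G F U"
    "card (iword_positions F U) < card (iword_positions F W)"
    "c \<in> normal_closure (topologists_product G) (free_part G)"
    "iword_class G W = iword_class G U \<otimes>\<^bsub>topologists_product G\<^esub> c"
proof -
  interpret T: group "topologists_product G" by (rule group_topologists_product)
  define L where "L = iword_sub W {y. y < x}"
  define A where "A = iword_sub W {x}"
  define R where "R = iword_sub W {y. x < y}"
  define U where "U = iword_concat L R"
  have iw: "is_iword G L" "is_iword G A" "is_iword G R" "is_iword G U"
    by (simp_all add: is_iword_sub[OF W] is_iword_concat L_def A_def R_def U_def)
  have fin: "finite (iword_positions F W)" by (rule finite_iword_positions[OF W F])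
  have "iword_positions F U = neg_emb ` (iword_positions F W - {x})"
    using x_max by (force simp: U_def L_def R_def iword_positions_concat iword_positions_sub)
  then have "card (iword_positions F U) = card (iword_positions F W - {x})"
    by (simp add: card_image strict_mono_imp_inj_on[OF strict_mono_neg_emb])
  also have "\<dots> < card (iword_positions F W)"
    using fin x by (rule card_Diff1_less)
  finally have card_less: "card (iword_positions F U) < card (iword_positions F W)" .
  have trivial_U: "trivial_without G F U"
    unfolding trivial_without_def
  proof
    fix m
    have "filter (\<lambda>l. fst l \<notin> F) (iword_restrict {..<m} A) = []"
      using x by (intro filter_iword_restrict_eq_Nil[OF iw(2) finite_lessThan])
        (auto simp: A_def iword_sub_def iword_positions_def)
    moreover have "iword_restrict {..<m} W
        = iword_restrict {..<m} L @ iword_restrict {..<m} A @ iword_restrict {..<m} R"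
      using iword_restrict_split[OF W finite_lessThan, of m x] by (simp add: L_def A_def R_def)
    ultimately have "filter (\<lambda>l. fst l \<notin> F) (iword_restrict {..<m} U)
        = filter (\<lambda>l. fst l \<notin> F) (iword_restrict {..<m} W)"
      by (simp add: U_def iword_restrict_concat[OF iw(1,3)])
    then show "reduce G (filter (\<lambda>l. fst l \<notin> F) (iword_restrict {..<m} U)) = []"
      using t by (simp add: trivial_without_def)
  qed
  have conj: "inv\<^bsub>topologists_product G\<^esub> iword_class G R \<otimes>\<^bsub>topologists_product G\<^esub> iword_class G A
      \<otimes>\<^bsub>topologists_product G\<^esub> iword_class G R \<in> normal_closure (topologists_product G) (free_part G)"
  proof -
    have "A \<in> iword_class G A" "finite (fst A)"
      using iw(2) by (simp_all add: mem_iword_class iword_eq_refl A_def iword_sub_def)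
    then have "iword_class G A \<in> free_part G"
      using iw(2) by (auto simp: free_part_def iword_class_in_carrier)
    moreover have R: "iword_class G R \<in> carrier (topologists_product G)"
      by (rule iword_class_in_carrier[OF iw(3)])
    ultimately have "inv\<^bsub>topologists_product G\<^esub> iword_class G R \<otimes>\<^bsub>topologists_product G\<^esub> iword_class G A
        \<otimes>\<^bsub>topologists_product G\<^esub> inv\<^bsub>topologists_product G\<^esub> (inv\<^bsub>topologists_product G\<^esub> iword_class G R)
        \<in> normal_closure (topologists_product G) (free_part G)"
      unfolding normal_closure_def by (blast intro: generate.incl)
    then show ?thesis using T.inv_inv[OF R] by simp
  qed
  have "iword_class G W = iword_class G U \<otimes>\<^bsub>topologists_product G\<^esub>
      (inv\<^bsub>topologists_product G\<^esub> iword_class G R \<otimes>\<^bsub>topologists_product G\<^esub> iword_class G A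
        \<otimes>\<^bsub>topologists_product G\<^esub> iword_class G R)"
    using iword_class_split_conj[OF W, of x] by (simp add: U_def L_def A_def R_def)
  from that[OF iw(4) trivial_U card_less conj this] show ?thesis .
qed

lemma finitely_trivial_subset_normal_closure:
  "finitely_trivial G \<subseteq> normal_closure (topologists_product G) (free_part G)"
proof
  interpret T: group "topologists_product G" by (rule group_topologists_product)
  let ?N = "normal_closure (topologists_product G) (free_part G)"
  interpret N: subgroup ?N "topologists_product G"
    by (rule subgroup_normal_closure[OF T.group_axioms]) (auto simp: free_part_def)
  fix a assume "a \<in> finitely_trivial G"
  then obtain W F where a: "a = iword_class G W" and W: "is_iword G W" and F: "finite F"
    and t: "trivial_without G F W"
    by (auto simp: finitely_trivial_def)
  have "iword_class G W \<in> ?N"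
    using W t
  proof (induction "card (iword_positions F W)" arbitrary: W rule: less_induct)
    case less
    show ?case
    proof (cases "iword_positions F W = {}")
      case True
      then show ?thesis using trivial_without_no_positions[OF less.prems(1) F less.prems(2)] by simp
    next
      case False
      then obtain x where "x \<in> iword_positions F W" "\<forall>y\<in>iword_positions F W. y \<le> x"
        using finite_iword_positions[OF less.prems(1) F] by (meson Max_ge Max_in)
      then obtain U c where "is_iword G U" "trivial_without G F U"
        "card (iword_positions F U) < card (iword_positions F W)" "c \<in> ?N"
        "iword_class G W = iword_class G U \<otimes>\<^bsub>topologists_product G\<^esub> c"
        using trivial_without_peel_last[OF less.prems(1) F less.prems(2)] by blast
      then show ?thesis using less.hyps N.m_closed by simp
    qed
  qed
  then show "a \<in> ?N" by (simp add: a)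
qed

theorem normal_closure_free_part:
  "normal_closure (topologists_product G) (free_part G) = finitely_trivial G"
  using normal_closure_subset_normal[OF group_topologists_product normal_finitely_trivial
      free_part_subset_finitely_trivial] finitely_trivial_subset_normal_closure
  by blast

end

section \<open>Countable orders embed into the rationals\<close>

text \<open>Cantor's construction: enumerate the type by \<open>to_nat\<close> and place the \<open>n\<close>-th element
  strictly between the values already assigned to the earlier elements below and above it.\<close>

definition order_emb_next :: "('s::countable \<Rightarrow> 's \<Rightarrow> bool) \<Rightarrow> nat \<Rightarrow> rat list \<Rightarrow> rat" where
  "order_emb_next R n vs =
    (let lo = (\<lambda>m. vs ! m) ` {m. m < n \<and> m \<in> range (to_nat :: 's \<Rightarrow> nat) \<and> R (from_nat m) (from_nat n)};
         hi = (\<lambda>m. vs ! m) ` {m. m < n \<and> m \<in> range (to_nat :: 's \<Rightarrow> nat) \<and> R (from_nat n) (from_nat m)}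
     in if lo = {} then (if hi = {} then 0 else Min hi - 1)
        else (if hi = {} then Max lo + 1 else (Max lo + Min hi) / 2))"

primrec order_emb_values :: "('s::countable \<Rightarrow> 's \<Rightarrow> bool) \<Rightarrow> nat \<Rightarrow> rat list" where
  "order_emb_values R 0 = []"
| "order_emb_values R (Suc n) = order_emb_values R n @ [order_emb_next R n (order_emb_values R n)]"

lemma length_order_emb_values [simp]: "length (order_emb_values R n) = n"
  by (induction n) auto

lemma order_emb_values_prefix: "m < n \<Longrightarrow> order_emb_values R n ! m = order_emb_values R (Suc m) ! m"
proof (induction n)
  case (Suc n)
  then show ?case by (cases "m = n") (auto simp: nth_append less_Suc_eq)
qed simp

lemma order_emb_next_bounds:
  fixes R :: "'s::countable \<Rightarrow> 's \<Rightarrow> bool"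
  assumes trans: "\<And>a b c. R a b \<Longrightarrow> R b c \<Longrightarrow> R a c"
    and mono: "\<forall>i j. i < n \<longrightarrow> j < n \<longrightarrow> i \<in> range (to_nat :: 's \<Rightarrow> nat) \<longrightarrow> j \<in> range (to_nat :: 's \<Rightarrow> nat) \<longrightarrow>
      R (from_nat i) (from_nat j) \<longrightarrow> vs ! i < vs ! j"
  shows "\<And>i. i < n \<Longrightarrow> i \<in> range (to_nat :: 's \<Rightarrow> nat) \<Longrightarrow> R (from_nat i) (from_nat n) \<Longrightarrow> vs ! i < order_emb_next R n vs"
    and "\<And>i. i < n \<Longrightarrow> i \<in> range (to_nat :: 's \<Rightarrow> nat) \<Longrightarrow> R (from_nat n) (from_nat i) \<Longrightarrow> order_emb_next R n vs < vs ! i"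
proof -
  define lo where "lo = (\<lambda>m. vs ! m) ` {m. m < n \<and> m \<in> range (to_nat :: 's \<Rightarrow> nat) \<and> R (from_nat m) (from_nat n)}"
  define hi where "hi = (\<lambda>m. vs ! m) ` {m. m < n \<and> m \<in> range (to_nat :: 's \<Rightarrow> nat) \<and> R (from_nat n) (from_nat m)}"
  have fin: "finite lo" "finite hi" unfolding lo_def hi_def by auto
  have next_eq: "order_emb_next R n vs = (if lo = {} then (if hi = {} then 0 else Min hi - 1)
      else (if hi = {} then Max lo + 1 else (Max lo + Min hi) / 2))"
    unfolding order_emb_next_def lo_def hi_def Let_def by simp
  have lo_hi: "Max lo < Min hi" if ne: "lo \<noteq> {}" "hi \<noteq> {}"
  proof -
    obtain a where "Max lo = vs ! a" "a < n" "a \<in> range (to_nat :: 's \<Rightarrow> nat)" "R (from_nat a) (from_nat n)"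
      using Max_in[OF fin(1) ne(1)] unfolding lo_def by auto
    moreover obtain b where "Min hi = vs ! b" "b < n" "b \<in> range (to_nat :: 's \<Rightarrow> nat)" "R (from_nat n) (from_nat b)"
      using Min_in[OF fin(2) ne(2)] unfolding hi_def by auto
    ultimately show ?thesis using trans mono by metis
  qed
  show "vs ! i < order_emb_next R n vs" if "i < n" "i \<in> range (to_nat :: 's \<Rightarrow> nat)" "R (from_nat i) (from_nat n)" for i
  proof -
    have "vs ! i \<in> lo" using that unfolding lo_def by auto
    then have "lo \<noteq> {}" "vs ! i \<le> Max lo" using Max_ge[OF fin(1)] by auto
    then show ?thesis
      using next_eq lo_hi by (cases "hi = {}") simp_all
  qed
  show "order_emb_next R n vs < vs ! i" if "i < n" "i \<in> range (to_nat :: 's \<Rightarrow> nat)" "R (from_nat n) (from_nat i)" for i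
  proof -
    have "vs ! i \<in> hi" using that unfolding hi_def by auto
    then have "hi \<noteq> {}" "Min hi \<le> vs ! i" using Min_le[OF fin(2)] by auto
    then show ?thesis
      using next_eq lo_hi by (cases "lo = {}") simp_all
  qed
qed

lemma order_emb_values_mono:
  fixes R :: "'s::countable \<Rightarrow> 's \<Rightarrow> bool"
  assumes trans: "\<And>a b c. R a b \<Longrightarrow> R b c \<Longrightarrow> R a c" and irrefl: "\<And>a. \<not> R a a"
  shows "\<And>i j. i < n \<Longrightarrow> j < n \<Longrightarrow> i \<in> range (to_nat :: 's \<Rightarrow> nat) \<Longrightarrow> j \<in> range (to_nat :: 's \<Rightarrow> nat) \<Longrightarrow>
    R (from_nat i) (from_nat j) \<Longrightarrow> order_emb_values R n ! i < order_emb_values R n ! j"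
proof (induction n)
  case (Suc n)
  have "\<forall>i j. i < n \<longrightarrow> j < n \<longrightarrow> i \<in> range (to_nat :: 's \<Rightarrow> nat) \<longrightarrow> j \<in> range (to_nat :: 's \<Rightarrow> nat) \<longrightarrow>
      R (from_nat i) (from_nat j) \<longrightarrow> order_emb_values R n ! i < order_emb_values R n ! j"
    using Suc.IH by blast
  note bounds = order_emb_next_bounds[of R, OF trans this]
  show ?case
  proof (cases "i = n")
    case True
    then have "j < n" using Suc.prems irrefl by (metis less_SucE)
    then show ?thesis using True bounds(2)[where i = j] Suc.prems by (simp add: nth_append)
  next
    case False
    then have i: "i < n" using Suc.prems by simp
    show ?thesis
    proof (cases "j = n")
      case True
      then show ?thesis using i bounds(1)[where i = i] Suc.prems by (simp add: nth_append)
    next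
      case False
      then show ?thesis using i Suc.IH Suc.prems by (simp add: nth_append)
    qed
  qed
qed simp

theorem countable_strict_order_embeds_rat:
  fixes R :: "'s::countable \<Rightarrow> 's \<Rightarrow> bool"
  assumes trans: "\<And>a b c. R a b \<Longrightarrow> R b c \<Longrightarrow> R a c" and irrefl: "\<And>a. \<not> R a a"
  shows "\<exists>f :: 's \<Rightarrow> rat. \<forall>a b. R a b \<longrightarrow> f a < f b"
proof -
  define f :: "'s \<Rightarrow> rat" where "f a = order_emb_values R (Suc (to_nat a)) ! to_nat a" for a
  have "f a < f b" if "R a b" for a b
  proof -
    define n where "n = Suc (max (to_nat a) (to_nat b))"
    have lt: "to_nat a < n" "to_nat b < n" unfolding n_def by auto
    then have "f a = order_emb_values R n ! to_nat a" "f b = order_emb_values R n ! to_nat b"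
      unfolding f_def by (simp_all add: order_emb_values_prefix)
    then show ?thesis
      using order_emb_values_mono[where R = R and n = n and i = "to_nat a" and j = "to_nat b",
          OF trans irrefl] that lt by simp
  qed
  then show ?thesis by blast
qed

definition lex_less :: "rat \<times> nat \<Rightarrow> rat \<times> nat \<Rightarrow> bool" where
  "lex_less p q \<longleftrightarrow> fst p < fst q \<or> (fst p = fst q \<and> snd p < snd q)"

definition lex_emb :: "rat \<times> nat \<Rightarrow> rat" where
  "lex_emb = (SOME f. \<forall>a b. lex_less a b \<longrightarrow> f a < f b)"

lemma lex_emb_less: "lex_less a b \<Longrightarrow> lex_emb a < lex_emb b"
proof -
  have "\<exists>f :: rat \<times> nat \<Rightarrow> rat. \<forall>a b. lex_less a b \<longrightarrow> f a < f b"
    by (rule countable_strict_order_embeds_rat) (auto simp: lex_less_def)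
  then have "\<forall>a b. lex_less a b \<longrightarrow> lex_emb a < lex_emb b"
    unfolding lex_emb_def by (rule someI_ex)
  then show "lex_less a b \<Longrightarrow> lex_emb a < lex_emb b" by blast
qed

lemma inj_lex_emb: "inj lex_emb"
proof (rule injI)
  fix a b assume eq: "lex_emb a = lex_emb b"
  show "a = b"
  proof (rule ccontr)
    assume "a \<noteq> b"
    then have "lex_less a b \<or> lex_less b a" by (auto simp: lex_less_def prod_eq_iff)
    then show False using lex_emb_less[of a b] lex_emb_less[of b a] eq by auto
  qed
qed

lemma sorted_lex_less_blocks:
  assumes "sorted_wrt (<) xs"
  shows "sorted_wrt lex_less (concat (map (\<lambda>x. map (Pair x) [0..<k x]) xs))"
  using assms
proof (induction xs)
  case (Cons x xs)
  have "sorted_wrt lex_less (map (Pair x) [0..<k x])"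
    unfolding sorted_wrt_map
    by (rule sorted_wrt_mono_rel[OF _ sorted_wrt_upt]) (simp add: lex_less_def)
  moreover have "\<forall>a\<in>set (map (Pair x) [0..<k x]).
      \<forall>b\<in>set (concat (map (\<lambda>x. map (Pair x) [0..<k x]) xs)). lex_less a b"
    using Cons.prems by (auto simp: lex_less_def)
  ultimately show ?case
    using Cons by (simp add: sorted_wrt_append)
qed simp

section \<open>Substituting words for letters\<close>

locale free_product_embeddings = G: group_family G + H: group_family H
  for G :: "nat \<Rightarrow> ('a, 'c) monoid_scheme" and H :: "nat \<Rightarrow> ('b, 'd) monoid_scheme" +
  fixes P :: "nat \<Rightarrow> nat set" and \<phi> :: "nat \<Rightarrow> 'a \<Rightarrow> (nat \<times> 'b) list set"
  assumes partition: "finite_partition P"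
    and hom_factor: "\<phi> n \<in> hom (G n) (free_product H (P n))"
    and inj_factor: "inj_on (\<phi> n) (carrier (G n))"
begin

lemma finite_part: "finite (P n)"
  using partition by (simp add: finite_partition_def)

lemma part_cover: "\<exists>n. i \<in> P n"
  using partition by (auto simp: finite_partition_def)

lemma part_unique: "i \<in> P m \<Longrightarrow> i \<in> P n \<Longrightarrow> m = n"
  using partition by (auto simp: finite_partition_def)

text \<open>Reducing makes this independent of the representative picked by \<open>SOME\<close>.\<close>

definition image_word :: "nat \<times> 'a \<Rightarrow> (nat \<times> 'b) list" where
  "image_word x = reduce H (SOME ws. ws \<in> \<phi> (fst x) (snd x))"

definition subst_word :: "(nat \<times> 'a) list \<Rightarrow> (nat \<times> 'b) list" where
  "subst_word xs = concat (map image_word xs)"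

lemma \<phi>_eq_fp_class:
  assumes "g \<in> carrier (G n)"
  obtains ws where "ws \<in> fp_words H (P n)" "\<phi> n g = fp_class H (P n) ws"
proof -
  have "\<phi> n g \<in> carrier (free_product H (P n))"
    using hom_factor[of n] assms by (auto simp: hom_def)
  then show ?thesis using that by (auto simp: free_product_def)
qed

lemma mem_\<phi>_iff:
  assumes g: "g \<in> carrier (G n)"
  shows "ws \<in> \<phi> n g \<longleftrightarrow> ws \<in> fp_words H (P n) \<and> reduce H ws = image_word (n, g)"
proof -
  obtain vs where vs: "vs \<in> fp_words H (P n)" "\<phi> n g = fp_class H (P n) vs"
    using \<phi>_eq_fp_class[OF g] .
  have mem: "ws \<in> \<phi> n g \<longleftrightarrow> ws \<in> fp_words H (P n) \<and> reduce H ws = reduce H vs" for ws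
  proof -
    have "ws \<in> \<phi> n g \<longleftrightarrow> ws \<in> fp_words H (P n) \<and> fp_eq H (P n) vs ws"
      using vs(2) by (simp add: fp_class_def)
    also have "\<dots> \<longleftrightarrow> ws \<in> fp_words H (P n) \<and> reduce H ws = reduce H vs"
      using vs(1) H.fp_eq_iff_reduce[of "P n" vs ws] by auto
    finally show ?thesis .
  qed
  have "vs \<in> \<phi> n g" using mem vs(1) by blast
  then have "(SOME ws. ws \<in> \<phi> n g) \<in> \<phi> n g" by (rule someI)
  then have "image_word (n, g) = reduce H vs"
    unfolding mem[of "SOME ws. ws \<in> \<phi> n g"] image_word_def by simp
  then show ?thesis using mem by simp
qed

lemma image_word_eq_reduce:
  assumes g: "g \<in> carrier (G n)"
  obtains vs where "vs \<in> fp_words H (P n)" "image_word (n, g) = reduce H vs"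
proof -
  obtain vs where vs: "vs \<in> fp_words H (P n)" "\<phi> n g = fp_class H (P n) vs"
    using \<phi>_eq_fp_class[OF g] .
  then have "vs \<in> \<phi> n g" by (simp add: fp_class_def fp_eq_def)
  then have "image_word (n, g) = reduce H vs"
    using mem_\<phi>_iff[OF g] by simp
  then show ?thesis by (rule that[OF vs(1)])
qed

lemma image_word_in_fp_words: "g \<in> carrier (G n) \<Longrightarrow> image_word (n, g) \<in> fp_words H (P n)"
  by (elim image_word_eq_reduce) (simp add: H.reduce_in_fp_words)

lemma reduced_image_word: "g \<in> carrier (G n) \<Longrightarrow> reduced_word H (image_word (n, g))"
  by (elim image_word_eq_reduce) (simp add: H.reduced_reduce fp_words_iff)

lemma is_word_image_word: "snd x \<in> carrier (G (fst x)) \<Longrightarrow> is_word H (image_word x)"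
  using reduced_image_word[of "snd x" "fst x"] reduced_word_imp_is_word by simp

lemma set_image_word: "snd x \<in> carrier (G (fst x)) \<Longrightarrow> l \<in> set (image_word x) \<Longrightarrow> fst l \<in> P (fst x)"
  using image_word_in_fp_words[of "snd x" "fst x"] by (auto simp: fp_words_iff)

lemma image_word_mult:
  assumes g: "g \<in> carrier (G n)" and h: "h \<in> carrier (G n)"
  shows "image_word (n, g \<otimes>\<^bsub>G n\<^esub> h) = reduce H (image_word (n, g) @ image_word (n, h))"
proof -
  interpret grp: group "G n" by (rule G.group_factor)
  have gh: "g \<otimes>\<^bsub>G n\<^esub> h \<in> carrier (G n)" using g h by simp
  have "image_word (n, g \<otimes>\<^bsub>G n\<^esub> h) \<in> \<phi> n (g \<otimes>\<^bsub>G n\<^esub> h)"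
    using mem_\<phi>_iff[OF gh] image_word_in_fp_words[OF gh] reduce_reduced[OF reduced_image_word[OF gh]]
    by simp
  also have "\<phi> n (g \<otimes>\<^bsub>G n\<^esub> h) = \<phi> n g \<otimes>\<^bsub>free_product H (P n)\<^esub> \<phi> n h"
    using hom_factor[of n] g h by (simp add: hom_def)
  finally obtain xs ys where xs: "xs \<in> \<phi> n g" and ys: "ys \<in> \<phi> n h"
    and eq: "fp_eq H (P n) (xs @ ys) (image_word (n, g \<otimes>\<^bsub>G n\<^esub> h))"
    by (auto simp: free_product_def)
  have xs': "is_word H xs" "reduce H xs = image_word (n, g)"
    using xs g by (simp_all add: mem_\<phi>_iff fp_words_iff)
  have ys': "is_word H ys" "reduce H ys = image_word (n, h)"
    using ys h by (simp_all add: mem_\<phi>_iff fp_words_iff)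
  have "image_word (n, g \<otimes>\<^bsub>G n\<^esub> h) = reduce H (xs @ ys)"
    using eq H.fp_eq_iff_reduce reduce_reduced[OF reduced_image_word[OF gh]] by metis
  also have "\<dots> = reduce H (reduce H xs @ reduce H ys)"
    using H.reduce_append_reduce[OF xs'(1) ys'(1)] by simp
  finally show ?thesis
    using xs'(2) ys'(2) by simp
qed

lemma image_word_one: "image_word (n, \<one>\<^bsub>G n\<^esub>) = []"
proof -
  interpret grp: group "G n" by (rule G.group_factor)
  define c where "c = image_word (n, \<one>\<^bsub>G n\<^esub>)"
  have r: "reduced_word H c" using reduced_image_word c_def by simp
  have w: "is_word H c" by (rule reduced_word_imp_is_word[OF r])
  have c_idem: "lmult_word H c c = c"
    using image_word_mult[of "\<one>\<^bsub>G n\<^esub>" n "\<one>\<^bsub>G n\<^esub>"] reduce_append[of H c c] reduce_reduced[OF r]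
    by (simp add: c_def)
  have c_Nil: "lmult_word H c [] = c"
    using reduce_reduced[OF r] by (simp add: reduce_def)
  have "c = lmult_word H (inv_word H c) (lmult_word H c c)"
    using H.lmult_word_inv_word_cancel[OF w r] by simp
  also have "\<dots> = lmult_word H (inv_word H c) (lmult_word H c [])"
    by (simp only: c_idem c_Nil)
  also have "\<dots> = []"
    using H.lmult_word_inv_word_cancel[OF w, of "[]"] by simp
  finally show ?thesis by (simp add: c_def)
qed

text \<open>This is where injectivity of the \<open>\<phi> n\<close> enters.\<close>

lemma image_word_eq_Nil_iff:
  assumes g: "g \<in> carrier (G n)"
  shows "image_word (n, g) = [] \<longleftrightarrow> g = \<one>\<^bsub>G n\<^esub>"
proof
  assume "image_word (n, g) = []"
  moreover have one: "\<one>\<^bsub>G n\<^esub> \<in> carrier (G n)" by (simp add: group.is_monoid[OF G.group_factor])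
  ultimately have "\<phi> n g = \<phi> n \<one>\<^bsub>G n\<^esub>"
    using mem_\<phi>_iff[OF g] mem_\<phi>_iff[OF one] image_word_one by auto
  then show "g = \<one>\<^bsub>G n\<^esub>" using inj_factor[of n] g one by (auto simp: inj_on_def)
qed (simp add: image_word_one)

lemma subst_word_simps [simp]:
  "subst_word [] = []"
  "subst_word (x # xs) = image_word x @ subst_word xs"
  "subst_word (xs @ ys) = subst_word xs @ subst_word ys"
  by (auto simp: subst_word_def)

lemma is_word_subst_word: "is_word G xs \<Longrightarrow> is_word H (subst_word xs)"
  by (induction xs) (auto simp: is_word_image_word)

lemma set_subst_word: "is_word G xs \<Longrightarrow> l \<in> set (subst_word xs) \<Longrightarrow> \<exists>x\<in>set xs. fst l \<in> P (fst x)"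
  by (induction xs) (auto dest: set_image_word)

lemma filter_subst_word:
  "is_word G xs \<Longrightarrow>
    filter (\<lambda>l. fst l \<notin> \<Union> (P ` E)) (subst_word xs) = subst_word (filter (\<lambda>l. fst l \<notin> E) xs)"
proof (induction xs)
  case (Cons x xs)
  have x: "snd x \<in> carrier (G (fst x))" using Cons.prems by simp
  show ?case
  proof (cases "fst x \<in> E")
    case True
    then have "filter (\<lambda>l. fst l \<notin> \<Union> (P ` E)) (image_word x) = []"
      by (intro filter_False) (use set_image_word[OF x] True in blast)
    then show ?thesis using True Cons by simp
  next
    case False
    then have "\<forall>l\<in>set (image_word x). fst l \<notin> \<Union> (P ` E)"
      using set_image_word[OF x] part_unique by blast
    then have "filter (\<lambda>l. fst l \<notin> \<Union> (P ` E)) (image_word x) = image_word x"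
      by (rule filter_True)
    then show ?thesis using False Cons by simp
  qed
qed simp

lemma reduce_subst_word_lmult_letter:
  assumes r: "reduced_word G r" and x: "snd x \<in> carrier (G (fst x))"
  shows "reduce H (subst_word (lmult_letter G x r)) = lmult_word H (image_word x) (reduce H (subst_word r))"
proof -
  obtain n g where x_eq: "x = (n, g)" by (cases x)
  have g: "g \<in> carrier (G n)" using x x_eq by simp
  consider "g = \<one>\<^bsub>G n\<^esub>" | "r = []" "g \<noteq> \<one>\<^bsub>G n\<^esub>"
    | y r' where "r = y # r'" "fst y \<noteq> n" "g \<noteq> \<one>\<^bsub>G n\<^esub>"
    | h r' where "r = (n, h) # r'" "g \<noteq> \<one>\<^bsub>G n\<^esub>"
  proof (cases r)
    case (Cons y r')
    then show ?thesis using that by (cases y) (cases "fst y = n", auto)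
  qed (use that in blast)
  then show ?thesis
  proof cases
    case 4
    have h: "h \<in> carrier (G n)" and r': "is_word G r'"
      using r 4 reduced_word_imp_is_word by auto
    have "lmult_word H (image_word x) (reduce H (subst_word r))
        = lmult_word H (image_word (n, g) @ image_word (n, h)) (reduce H (subst_word r'))"
      using 4 x_eq by (simp add: reduce_append)
    also have "\<dots> = lmult_word H (image_word (n, g \<otimes>\<^bsub>G n\<^esub> h)) (reduce H (subst_word r'))"
      using H.lmult_word_reduce[symmetric] image_word_mult[OF g h] is_word_image_word g h
        H.reduced_reduce[OF is_word_subst_word[OF r']]
      by (metis fst_conv is_word_simps(3) snd_conv)
    finally show ?thesis
      using 4 x_eq image_word_one by (simp add: lmult_letter_def reduce_append)
  qed (use x_eq image_word_one in \<open>simp_all add: lmult_letter_def reduce_def\<close>)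
qed

lemma reduce_subst_word_reduce: "is_word G xs \<Longrightarrow> reduce H (subst_word (reduce G xs)) = reduce H (subst_word xs)"
proof (induction xs)
  case (Cons x xs)
  then show ?case
    using reduce_subst_word_lmult_letter[OF G.reduced_reduce, of xs x] by (simp add: reduce_append)
qed simp

lemma reduced_subst_word:
  "reduced_word G r \<Longrightarrow>
    reduced_word H (subst_word r) \<and> (r \<noteq> [] \<longrightarrow> subst_word r \<noteq> [] \<and> fst (hd (subst_word r)) \<in> P (fst (hd r)))"
proof (induction r)
  case (Cons x r)
  obtain n g where x_eq: "x = (n, g)" by (cases x)
  have g: "g \<in> carrier (G n)" "g \<noteq> \<one>\<^bsub>G n\<^esub>" and r: "reduced_word G r"
    and distinct: "r = [] \<or> fst (hd r) \<noteq> n"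
    using Cons.prems x_eq by auto
  have ne: "image_word (n, g) \<noteq> []" using image_word_eq_Nil_iff g by simp
  have last: "fst (last (image_word (n, g))) \<in> P n" and hd: "fst (hd (image_word (n, g))) \<in> P n"
    using set_image_word[of "(n, g)"] g(1) last_in_set[OF ne] hd_in_set[OF ne] by simp_all
  have IH: "reduced_word H (subst_word r)"
    "r \<noteq> [] \<Longrightarrow> subst_word r \<noteq> [] \<and> fst (hd (subst_word r)) \<in> P (fst (hd r))"
    using Cons.IH[OF r] by auto
  have "subst_word r = [] \<or> fst (last (image_word (n, g))) \<noteq> fst (hd (subst_word r))"
    using IH(2) distinct last part_unique by (cases "r = []") (simp, metis)
  then have "reduced_word H (image_word (n, g) @ subst_word r)"
    using reduced_word_append[OF reduced_image_word[OF g(1)] IH(1)] by blast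
  then show ?case
    using ne hd x_eq by simp
qed simp

lemma subst_word_trivial:
  assumes "is_word G xs" "reduce H (subst_word xs) = []"
  shows "reduce G xs = []"
proof -
  have r: "reduced_word G (reduce G xs)" by (rule G.reduced_reduce[OF assms(1)])
  have "subst_word (reduce G xs) = reduce H (subst_word xs)"
    using reduced_subst_word[OF r] reduce_reduced reduce_subst_word_reduce[OF assms(1)] by metis
  then show ?thesis using assms(2) reduced_subst_word[OF r] by auto
qed

end

context free_product_embeddings
begin

definition part_index :: "nat \<Rightarrow> nat" where
  "part_index i = (SOME n. i \<in> P n)"

lemma mem_part_index: "i \<in> P (part_index i)"
  unfolding part_index_def using part_cover by (rule someI_ex)

lemma part_index_eq: "i \<in> P n \<Longrightarrow> part_index i = n"
  using part_unique mem_part_index by blast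

lemma finite_parts_bound:
  assumes "finite S"
  obtains m where "\<And>n i. i \<in> S \<Longrightarrow> i \<in> P n \<Longrightarrow> n < m"
proof
  fix n i assume "i \<in> S" "i \<in> P n"
  then have "n \<in> insert 0 (part_index ` S)" using part_index_eq by auto
  then show "n < Suc (Max (insert 0 (part_index ` S)))"
    using assms by (simp add: le_imp_less_Suc)
qed

text \<open>The letter at position \<open>x\<close> of \<open>W\<close> is replaced by the letters of its image word, placed at
  the positions \<open>(x, j)\<close> ordered lexicographically and moved back into \<open>\<rat>\<close> by \<open>lex_emb\<close>.\<close>

definition image_positions :: "'a iword \<Rightarrow> (rat \<times> nat) set" where
  "image_positions W = {p. fst p \<in> fst W \<and> snd p < length (image_word (snd W (fst p)))}"

definition subst_iword :: "'a iword \<Rightarrow> 'b iword" where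
  "subst_iword W =
    (lex_emb ` image_positions W,
     \<lambda>q. image_word (snd W (fst (inv_into UNIV lex_emb q))) ! snd (inv_into UNIV lex_emb q))"

definition image_factor :: "'a iword \<Rightarrow> rat \<times> nat \<Rightarrow> nat" where
  "image_factor W p = fst (image_word (snd W (fst p)) ! snd p)"

definition image_positions_list :: "nat \<Rightarrow> 'a iword \<Rightarrow> (rat \<times> nat) list" where
  "image_positions_list m W =
    concat (map (\<lambda>x. map (Pair x) [0..<length (image_word (snd W x))])
      (sorted_list_of_set (iword_positions {..<m} W)))"

lemma snd_subst_iword_lex_emb [simp]:
  "snd (subst_iword W) (lex_emb p) = image_word (snd W (fst p)) ! snd p"
  by (simp add: subst_iword_def inv_f_f[OF inj_lex_emb])

lemma iword_positions_subst_iword: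
  "iword_positions S (subst_iword W) = lex_emb ` {p \<in> image_positions W. image_factor W p \<in> S}"
  by (auto simp: iword_positions_def subst_iword_def image_factor_def inv_f_f[OF inj_lex_emb])

lemma image_word_letter:
  assumes "is_iword G W" "x \<in> fst W" "j < length (image_word (snd W x))"
  shows "fst (image_word (snd W x) ! j) \<in> P (fst (snd W x))"
    and "snd (image_word (snd W x) ! j) \<in> carrier (H (fst (image_word (snd W x) ! j)))"
    and "snd (image_word (snd W x) ! j) \<noteq> \<one>\<^bsub>H (fst (image_word (snd W x) ! j))\<^esub>"
proof -
  obtain n g where e: "snd W x = (n, g)" by (cases "snd W x")
  have g: "g \<in> carrier (G n)" using assms e by (auto simp: is_iword_def)
  have mem: "image_word (n, g) ! j \<in> set (image_word (n, g))" using assms(3) e by simp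
  show "fst (image_word (snd W x) ! j) \<in> P (fst (snd W x))"
    using set_image_word[of "(n, g)"] g mem e by simp
  have "\<forall>l \<in> set r. snd l \<in> carrier (H (fst l)) \<and> snd l \<noteq> \<one>\<^bsub>H (fst l)\<^esub>" if "reduced_word H r" for r
    using that by (induction r) auto
  then show "snd (image_word (snd W x) ! j) \<in> carrier (H (fst (image_word (snd W x) ! j)))"
    "snd (image_word (snd W x) ! j) \<noteq> \<one>\<^bsub>H (fst (image_word (snd W x) ! j))\<^esub>"
    using reduced_image_word[OF g] mem e by auto
qed

lemma image_positions_in_restrict:
  assumes W: "is_iword G W" and m: "\<And>n i. i \<in> S \<Longrightarrow> i \<in> P n \<Longrightarrow> n < m"
  shows "{p \<in> image_positions W. image_factor W p \<in> S}
    = {p \<in> set (image_positions_list m W). image_factor W p \<in> S}"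
proof -
  have "fst p \<in> iword_positions {..<m} W" if "p \<in> image_positions W" "image_factor W p \<in> S" for p
  proof -
    have "image_factor W p \<in> P (fst (snd W (fst p)))"
      using image_word_letter(1)[OF W] that(1) by (auto simp: image_positions_def image_factor_def)
    then show ?thesis
      using m that by (auto simp: image_positions_def iword_positions_def)
  qed
  moreover have "finite (iword_positions {..<m} W)"
    by (rule finite_iword_positions[OF W finite_lessThan])
  ultimately show ?thesis
    by (auto simp: image_positions_list_def image_positions_def iword_positions_def)
qed

lemma is_iword_subst_iword:
  assumes W: "is_iword G W"
  shows "is_iword H (subst_iword W)"
  unfolding is_iword_iff_positions
proof (rule conjI; intro ballI allI)
  fix q assume "q \<in> fst (subst_iword W)"
  then obtain p where "p \<in> image_positions W" "q = lex_emb p"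
    by (auto simp: subst_iword_def)
  then show "snd (snd (subst_iword W) q) \<in> carrier (H (fst (snd (subst_iword W) q)))
      \<and> snd (snd (subst_iword W) q) \<noteq> \<one>\<^bsub>H (fst (snd (subst_iword W) q))\<^esub>"
    using image_word_letter(2,3)[OF W, of "fst p" "snd p"] by (auto simp: image_positions_def)
next
  fix i
  obtain m where m: "\<And>n i'. i' \<in> {i} \<Longrightarrow> i' \<in> P n \<Longrightarrow> n < m"
    using finite_parts_bound[of "{i}"] by blast
  have "iword_positions {i} (subst_iword W)
      = lex_emb ` {p \<in> set (image_positions_list m W). image_factor W p \<in> {i}}"
    by (simp only: iword_positions_subst_iword image_positions_in_restrict[OF W m])
  then show "finite (iword_positions {i} (subst_iword W))" by simp
qed

lemma iword_restrict_subst_iword: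
  assumes W: "is_iword G W" and S: "finite S" and m: "\<And>n i. i \<in> S \<Longrightarrow> i \<in> P n \<Longrightarrow> n < m"
  shows "iword_restrict S (subst_iword W) = filter (\<lambda>l. fst l \<in> S) (subst_word (iword_restrict {..<m} W))"
proof -
  let ?ps = "filter (\<lambda>p. image_factor W p \<in> S) (image_positions_list m W)"
  let ?letter = "\<lambda>p. image_word (snd W (fst p)) ! snd p"
  have sorted: "sorted_wrt (<) (map lex_emb ?ps)"
    unfolding sorted_wrt_map
  proof (rule sorted_wrt_mono_rel[of _ lex_less])
    show "sorted_wrt lex_less ?ps"
      unfolding image_positions_list_def
      by (rule sorted_wrt_filter[OF sorted_lex_less_blocks]) (rule strict_sorted_list_of_set)
  qed (rule lex_emb_less)
  have "iword_positions S (subst_iword W) = lex_emb ` {p \<in> set (image_positions_list m W). image_factor W p \<in> S}"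
    by (simp only: iword_positions_subst_iword image_positions_in_restrict[OF W m])
  then have "sorted_list_of_set (iword_positions S (subst_iword W)) = map lex_emb ?ps"
    using sorted by (intro sorted_list_of_set_eqI) (auto simp: finite_iword_positions[OF is_iword_subst_iword[OF W] S])
  then have "iword_restrict S (subst_iword W) = map ?letter ?ps"
    unfolding iword_restrict_def by (simp add: comp_def)
  also have "\<dots> = filter (\<lambda>l. fst l \<in> S) (map ?letter (image_positions_list m W))"
    by (simp add: filter_map comp_def image_factor_def)
  also have "map ?letter (image_positions_list m W) = subst_word (iword_restrict {..<m} W)"
    unfolding image_positions_list_def iword_restrict_def subst_word_def
    by (simp add: map_concat comp_def map_nth)
  finally show ?thesis .
qed

lemma reduce_restrict_subst_iword:
  assumes W: "is_iword G W" and S: "finite S" and m: "\<And>n i. i \<in> S \<Longrightarrow> i \<in> P n \<Longrightarrow> n < m"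
  shows "reduce H (iword_restrict S (subst_iword W))
    = reduce H (filter (\<lambda>l. fst l \<in> S) (reduce H (subst_word (reduce G (iword_restrict {..<m} W)))))"
proof -
  have w: "is_word G (iword_restrict {..<m} W)" by (rule is_word_iword_restrict[OF W finite_lessThan])
  then show ?thesis
    using iword_restrict_subst_iword[OF W S m] reduce_subst_word_reduce[OF w]
      H.reduce_filter_reduce[OF is_word_subst_word[OF w], of "\<lambda>n. n \<in> S"]
    by simp
qed

lemma iword_eq_subst_iword:
  assumes W: "is_iword G W" and V: "is_iword G V" and eq: "iword_eq G W V"
  shows "iword_eq H (subst_iword W) (subst_iword V)"
proof -
  have "reduce H (iword_restrict {..<k} (subst_iword W)) = reduce H (iword_restrict {..<k} (subst_iword V))" for k
  proof -
    obtain m where m: "\<And>n i. i \<in> {..<k} \<Longrightarrow> i \<in> P n \<Longrightarrow> n < m"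
      using finite_parts_bound[of "{..<k}"] by auto
    show ?thesis
      using reduce_restrict_subst_iword[OF W finite_lessThan m] reduce_restrict_subst_iword[OF V finite_lessThan m]
        G.iword_eq_reduce_restrict[OF W V eq finite_lessThan] by simp
  qed
  then show ?thesis
    using H.iword_eq_iff_reduce[OF is_iword_subst_iword[OF W] is_iword_subst_iword[OF V]] by blast
qed

lemma subst_iword_concat:
  assumes W: "is_iword G W" and V: "is_iword G V"
  shows "iword_eq H (subst_iword (iword_concat W V)) (iword_concat (subst_iword W) (subst_iword V))"
proof (rule iword_eq_restrictI)
  fix k
  obtain m where m: "\<And>n i. i \<in> {..<k} \<Longrightarrow> i \<in> P n \<Longrightarrow> n < m"
    using finite_parts_bound[of "{..<k}"] by auto
  show "iword_restrict {..<k} (subst_iword (iword_concat W V))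
      = iword_restrict {..<k} (iword_concat (subst_iword W) (subst_iword V))"
    using iword_restrict_subst_iword[OF is_iword_concat[OF W V] finite_lessThan m]
      iword_restrict_subst_iword[OF W finite_lessThan m] iword_restrict_subst_iword[OF V finite_lessThan m]
      iword_restrict_concat[OF W V finite_lessThan]
      iword_restrict_concat[OF is_iword_subst_iword[OF W] is_iword_subst_iword[OF V] finite_lessThan]
    by simp
qed

end

context free_product_embeddings
begin

definition subst_class :: "'a iword set \<Rightarrow> 'b iword set" where
  "subst_class a = iword_class H (subst_iword (SOME W. W \<in> a))"

lemma subst_class_iword_class:
  assumes W: "is_iword G W"
  shows "subst_class (iword_class G W) = iword_class H (subst_iword W)"
proof -
  have "W \<in> iword_class G W" using W by (simp add: mem_iword_class iword_eq_refl)
  then have "(SOME V. V \<in> iword_class G W) \<in> iword_class G W" by (rule someI)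
  then have V: "is_iword G (SOME V. V \<in> iword_class G W)" "iword_eq G W (SOME V. V \<in> iword_class G W)"
    by (auto simp: mem_iword_class)
  then show ?thesis
    unfolding subst_class_def
    using iword_class_eq_iff[OF is_iword_subst_iword[OF V(1)] is_iword_subst_iword[OF W]]
      iword_eq_subst_iword[OF W V] iword_eq_sym by blast
qed

lemma subst_class_hom: "subst_class \<in> hom (topologists_product G) (topologists_product H)"
proof (rule homI)
  fix a assume "a \<in> carrier (topologists_product G)"
  then show "subst_class a \<in> carrier (topologists_product H)"
    by (auto simp: carrier_topologists_product subst_class_iword_class is_iword_subst_iword)
next
  fix a b assume "a \<in> carrier (topologists_product G)" "b \<in> carrier (topologists_product G)"
  then obtain W V where W: "is_iword G W" "a = iword_class G W" and V: "is_iword G V" "b = iword_class G V"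
    by (auto simp: carrier_topologists_product)
  have "subst_class (a \<otimes>\<^bsub>topologists_product G\<^esub> b) = iword_class H (subst_iword (iword_concat W V))"
    using W V by (simp add: G.mult_topologists_product subst_class_iword_class is_iword_concat)
  also have "\<dots> = iword_class H (iword_concat (subst_iword W) (subst_iword V))"
    using iword_class_eq_iff subst_iword_concat[OF W(1) V(1)] is_iword_concat
      is_iword_subst_iword[OF W(1)] is_iword_subst_iword[OF V(1)] is_iword_subst_iword[OF is_iword_concat[OF W(1) V(1)]]
    by blast
  also have "\<dots> = subst_class a \<otimes>\<^bsub>topologists_product H\<^esub> subst_class b"
    using W V by (simp add: H.mult_topologists_product is_iword_subst_iword subst_class_iword_class)
  finally show "subst_class (a \<otimes>\<^bsub>topologists_product G\<^esub> b)
      = subst_class a \<otimes>\<^bsub>topologists_product H\<^esub> subst_class b" .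
qed

lemma trivial_without_subst_iwordI:
  assumes W: "is_iword G W" and t: "trivial_without G E W"
  shows "trivial_without H (\<Union> (P ` E)) (subst_iword W)"
  unfolding trivial_without_def
proof
  fix k
  obtain m where m: "\<And>n i. i \<in> {..<k} \<Longrightarrow> i \<in> P n \<Longrightarrow> n < m"
    using finite_parts_bound[of "{..<k}"] by auto
  let ?xs = "filter (\<lambda>l. fst l \<notin> E) (iword_restrict {..<m} W)"
  have w: "is_word G (iword_restrict {..<m} W)" by (rule is_word_iword_restrict[OF W finite_lessThan])
  have "filter (\<lambda>l. fst l \<notin> \<Union> (P ` E)) (iword_restrict {..<k} (subst_iword W))
      = filter (\<lambda>l. fst l \<in> {..<k}) (subst_word ?xs)"
  proof -
    have "iword_restrict {..<k} (subst_iword W)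
        = filter (\<lambda>l. fst l \<in> {..<k}) (subst_word (iword_restrict {..<m} W))"
      by (rule iword_restrict_subst_iword[OF W finite_lessThan m])
    then show ?thesis
      by (simp only: filter_subst_word[OF w, symmetric] filter_filter conj_commute)
  qed
  moreover have "reduce H (filter (\<lambda>l. fst l \<in> {..<k}) (subst_word ?xs))
      = reduce H (filter (\<lambda>l. fst l \<in> {..<k}) (reduce H (subst_word (reduce G ?xs))))"
    using H.reduce_filter_reduce[OF is_word_subst_word[OF is_word_filter[OF w]], of "\<lambda>n. n \<in> {..<k}"]
      reduce_subst_word_reduce[OF is_word_filter[OF w]] by simp
  moreover have "reduce G ?xs = []" using t by (simp add: trivial_without_def)
  ultimately show "reduce H (filter (\<lambda>l. fst l \<notin> \<Union> (P ` E)) (iword_restrict {..<k} (subst_iword W))) = []"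
    by simp
qed

lemma trivial_without_subst_iwordD:
  assumes W: "is_iword G W" and t: "trivial_without H (\<Union> (P ` E)) (subst_iword W)"
  shows "trivial_without G E W"
  unfolding trivial_without_def
proof
  fix m
  define S where "S = \<Union> (P ` {..<m})"
  have S: "finite S" "\<And>n i. i \<in> S \<Longrightarrow> i \<in> P n \<Longrightarrow> n < m"
    using finite_part part_unique by (auto simp: S_def)
  let ?xs = "filter (\<lambda>l. fst l \<notin> E) (iword_restrict {..<m} W)"
  have w: "is_word G (iword_restrict {..<m} W)" by (rule is_word_iword_restrict[OF W finite_lessThan])
  have "\<forall>l\<in>set (subst_word (iword_restrict {..<m} W)). fst l \<in> S"
    using set_subst_word[OF w] iword_restrict_in_fp_words[OF W finite_lessThan, of m]
    by (fastforce simp: S_def fp_words_iff)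
  then have "iword_restrict S (subst_iword W) = subst_word (iword_restrict {..<m} W)"
    using iword_restrict_subst_iword[OF W S] by (simp add: filter_True)
  then have "filter (\<lambda>l. fst l \<notin> \<Union> (P ` E)) (iword_restrict S (subst_iword W)) = subst_word ?xs"
    using filter_subst_word[OF w] by simp
  then have "reduce H (subst_word ?xs) = []"
    using H.trivial_without_finite_restrict[OF is_iword_subst_iword[OF W] t S(1)] by simp
  then show "reduce G ?xs = []"
    by (rule subst_word_trivial[OF is_word_filter[OF w]])
qed

lemma subst_class_finitely_trivial_iff:
  assumes a: "a \<in> carrier (topologists_product G)"
  shows "subst_class a \<in> finitely_trivial H \<longleftrightarrow> a \<in> finitely_trivial G"
proof -
  obtain W where W: "is_iword G W" "a = iword_class G W"
    using a by (auto simp: carrier_topologists_product)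
  have "(\<exists>F. finite F \<and> trivial_without H F (subst_iword W)) \<longleftrightarrow> (\<exists>E. finite E \<and> trivial_without G E W)"
  proof
    assume "\<exists>F. finite F \<and> trivial_without H F (subst_iword W)"
    then obtain F where F: "finite F" "trivial_without H F (subst_iword W)" by blast
    have "F \<subseteq> \<Union> (P ` (part_index ` F))" using mem_part_index by auto
    then have "trivial_without H (\<Union> (P ` (part_index ` F))) (subst_iword W)"
      by (rule H.trivial_without_mono[OF is_iword_subst_iword[OF W(1)] F(2)])
    then show "\<exists>E. finite E \<and> trivial_without G E W"
      using trivial_without_subst_iwordD[OF W(1)] F(1) by blast
  next
    assume "\<exists>E. finite E \<and> trivial_without G E W"
    then show "\<exists>F. finite F \<and> trivial_without H F (subst_iword W)"
      using trivial_without_subst_iwordI[OF W(1)] finite_part by blast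
  qed
  then show ?thesis
    using W G.finitely_trivial_iword_class H.finitely_trivial_iword_class is_iword_subst_iword
    by (simp add: subst_class_iword_class)
qed

theorem embeds_archipelago: "embeds (archipelago G) (archipelago H)"
  unfolding archipelago_def G.normal_closure_free_part H.normal_closure_free_part
proof (rule embeds_quotient_group)
  have "finitely_trivial G \<subseteq> carrier (topologists_product G)"
    by (auto simp: finitely_trivial_def)
  then show "finitely_trivial G = {a \<in> carrier (topologists_product G). subst_class a \<in> finitely_trivial H}"
    using subst_class_finitely_trivial_iff by blast
qed (simp_all add: G.group_topologists_product H.group_topologists_product subst_class_hom
      H.normal_finitely_trivial)

end

theorem proposition19:
  fixes G :: "nat \<Rightarrow> 'a monoid" and H :: "nat \<Rightarrow> 'b monoid"
    and P :: "nat \<Rightarrow> nat set" and \<phi> :: "nat \<Rightarrow> 'a \<Rightarrow> (nat \<times> 'b) list set"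
  assumes "\<And>n. group (G n)" and "\<And>n. group (H n)"
    and "finite_partition P"
    and "\<And>n. \<phi> n \<in> hom (G n) (free_product H (P n))"
    and "\<And>n. inj_on (\<phi> n) (carrier (G n))"
  shows "embeds (archipelago G) (archipelago H)"
proof -
  interpret free_product_embeddings G H P \<phi>
    by (intro free_product_embeddings.intro free_product_embeddings_axioms.intro group_family.intro)
      (fact assms)+
  show ?thesis by (rule embeds_archipelago)
qed

end
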